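(* Let $A,B$ be real symmetric $4\times 4$ matrices defining quadrics $\mathcal A: X^TAX=0$, $\mathcal B: X^TBX=0$ in $\mathbb{PR}^3$ with $f(\lambda)=\det(\lambda A-B)$ not identically zero. If $f(\lambda)=0$ has one triple root and a simple root with Segre characteristic $[(21)1]$, then the only possible index sequences (up to equivalence) are $\langle 1\,{\wr\wr}_{-}|\,2\,|\,3\rangle$ and $\langle 1\,{\wr\wr}_{+}|\,2\,|\,3\rangle$ (the triple root carrying the string ${\wr\wr}_{\pm}|$). Furthermore: (1) when the index sequence is $\langle 1\,{\wr\wr}_{-}|\,2\,|\,3\rangle$, the QSIC comprises two real conics tangent to each other at one real point; (2) when the index sequence is $\langle 1\,{\wr\wr}_{+}|\,2\,|\,3\rangle$, the QSIC comprises two imaginary conics tangent to each other at one real point.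
   Context: $X=(x,y,z,w)^T$ homogeneous coordinates; QSIC $=\mathcal A\cap\mathcal B$. One may take $A$ nonsingular. Canonical form: for $A$ nonsingular there is a real invertible $Q$ with $Q^TAQ=\mathrm{diag}(\varepsilon_1E_1,\dots,\varepsilon_rE_r,E_{r+1},\dots,E_m)$, $Q^TBQ=\mathrm{diag}(\varepsilon_1E_1J_1,\dots,\varepsilon_rE_rJ_r,E_{r+1}J_{r+1},\dots,E_mJ_m)$, $J_1,\dots,J_r$ the real Jordan blocks of $A^{-1}B$ for real eigenvalues, $E_i$ anti-identity matrices, $\varepsilon_i\in\{\pm1\}$ uniquely determined (sign of $J_i$). Segre characteristic $[(21)1]$: one eigenvalue with a $2\times2$ and a $1\times1$ block, another with a $1\times1$ block. $\mathrm{Id}(\lambda)$ = number of positive eigenvalues of $\lambda A-B$. Index sequence $\langle s_0\sigma_1s_1\sigma_2s_2\rangle$: $s_j$ the values of $\mathrm{Id}$ on the intervals determined by the real roots; $\sigma_j$ lists the blocks of root $j$, larger first: $p$ copies of $\wr$ with subscript the block's sign for a $p\times p$ block, $p\ge2$, and $|$ for a $1\times1$ block. Equivalence: induced by change of basis of the pencil (rotation, reversal, complement $s_j\mapsto 4-s_j$ with sign reversal). A conic is real if it has infinitely many real points, imaginary otherwise. *)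

theory Defs
  imports "HOL-Analysis.Analysis" "HOL-Computational_Algebra.Polynomial"
begin

definition symmetric4 :: "real^4^4 \<Rightarrow> bool" where
  "symmetric4 M \<longleftrightarrow> transpose M = M"

definition pencil_poly :: "real^4^4 \<Rightarrow> real^4^4 \<Rightarrow> real poly" where
  "pencil_poly A B = det (\<chi> i j. [: - (B$i$j), A$i$j :])"

definition charpoly4 :: "real^4^4 \<Rightarrow> real poly" where
  "charpoly4 M = det (\<chi> i j. (if i = j then [:0, 1:] else 0) - [: M$i$j :])"

definition npos_eig :: "real^4^4 \<Rightarrow> nat" where
  "npos_eig M = (\<Sum>r\<in>{r. r > 0 \<and> poly (charpoly4 M) r = 0}. order r (charpoly4 M))"

definition Id_pencil :: "real^4^4 \<Rightarrow> real^4^4 \<Rightarrow> real \<Rightarrow> nat" where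
  "Id_pencil A B l = npos_eig (l *\<^sub>R A - B)"

definition jordan_21_1 :: "real \<Rightarrow> real \<Rightarrow> real^4^4" where
  "jordan_21_1 l1 l2 = vector [vector [l1, 1, 0, 0], vector [0, l1, 0, 0],
                               vector [0, 0, l1, 0], vector [0, 0, 0, l2]]"

text \<open>Segre characteristic [(21)1]: A^{-1}B has, at eigenvalue l1, Jordan blocks of
  sizes 2 and 1, and at eigenvalue l2 a single block of size 1.\<close>
definition segre_21_1 :: "real^4^4 \<Rightarrow> real^4^4 \<Rightarrow> real \<Rightarrow> real \<Rightarrow> bool" where
  "segre_21_1 A B l1 l2 \<longleftrightarrow> l1 \<noteq> l2 \<and>
     (\<exists>P. invertible P \<and> matrix_inv P ** (matrix_inv A ** B) ** P = jordan_21_1 l1 l2)"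

datatype sgn = Pos | Neg

definition sgnr :: "sgn \<Rightarrow> real" where
  "sgnr s = (case s of Pos \<Rightarrow> 1 | Neg \<Rightarrow> -1)"

text \<open>Block symbols: \<open>Wr s\<close> is one wiggle with subscript sign s, \<open>Bar\<close> is a 1x1 block.\<close>
datatype blocksym = Wr sgn | Bar

text \<open>Index sequence <s0 sigma1 s1 sigma2 s2 ...>: list of values s_j and list of
  root strings sigma_j.\<close>
datatype idxseq = IdxSeq "nat list" "blocksym list list"

text \<open>Canonical forms diag(eps E_2, e2, e3) and diag(eps E_2 J_2(l1), e2 l1, e3 l2).\<close>
definition canA_21_1 :: "real \<Rightarrow> real \<Rightarrow> real \<Rightarrow> real^4^4" where
  "canA_21_1 e e2 e3 = vector [vector [0, e, 0, 0], vector [e, 0, 0, 0],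
                               vector [0, 0, e2, 0], vector [0, 0, 0, e3]]"

definition canB_21_1 :: "real \<Rightarrow> real \<Rightarrow> real \<Rightarrow> real \<Rightarrow> real \<Rightarrow> real^4^4" where
  "canB_21_1 e e2 e3 l1 l2 = vector [vector [0, e * l1, 0, 0], vector [e * l1, e, 0, 0],
                                     vector [0, 0, e2 * l1, 0], vector [0, 0, 0, e3 * l2]]"

definition index_sequence_21_1 :: "real^4^4 \<Rightarrow> real^4^4 \<Rightarrow> idxseq \<Rightarrow> bool" where
  "index_sequence_21_1 A B S \<longleftrightarrow>
     (\<exists>Q l1 l2 e e2 e3 s0 s1 s2.
        invertible Q \<and> l1 \<noteq> l2 \<and>
        transpose Q ** A ** Q = canA_21_1 (sgnr e) (sgnr e2) (sgnr e3) \<and>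
        transpose Q ** B ** Q = canB_21_1 (sgnr e) (sgnr e2) (sgnr e3) l1 l2 \<and>
        (\<forall>l. l < min l1 l2 \<longrightarrow> Id_pencil A B l = s0) \<and>
        (\<forall>l. min l1 l2 < l \<and> l < max l1 l2 \<longrightarrow> Id_pencil A B l = s1) \<and>
        (\<forall>l. max l1 l2 < l \<longrightarrow> Id_pencil A B l = s2) \<and>
        S = IdxSeq [s0, s1, s2]
              (if l1 < l2 then [[Wr e, Wr e, Bar], [Bar]] else [[Bar], [Wr e, Wr e, Bar]]))"

text \<open>Index sequence up to equivalence: equivalence is induced by change of basis
  of the pencil, (A,B) \<mapsto> (aA+bB, cA+dB) with ad-bc \<noteq> 0 (new A nonsingular).\<close>
definition index_sequence_equiv :: "real^4^4 \<Rightarrow> real^4^4 \<Rightarrow> idxseq \<Rightarrow> bool" where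
  "index_sequence_equiv A B S \<longleftrightarrow>
     (\<exists>a b c d. a * d - b * c \<noteq> 0 \<and> det (a *\<^sub>R A + b *\<^sub>R B) \<noteq> 0 \<and>
        index_sequence_21_1 (a *\<^sub>R A + b *\<^sub>R B) (c *\<^sub>R A + d *\<^sub>R B) S)"

definition seq_minus :: idxseq where
  "seq_minus = IdxSeq [1, 2, 3] [[Wr Neg, Wr Neg, Bar], [Bar]]"

definition seq_plus :: idxseq where
  "seq_plus = IdxSeq [1, 2, 3] [[Wr Pos, Wr Pos, Bar], [Bar]]"

text \<open>Projective points of PC^3 are represented by nonzero vectors in complex^4;
  sets of points by cones (closed under nonzero complex scaling).\<close>

definition cbil :: "complex^4^4 \<Rightarrow> complex^4 \<Rightarrow> complex^4 \<Rightarrow> complex" where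
  "cbil S X Y = (\<Sum>i\<in>UNIV. \<Sum>j\<in>UNIV. X$i * S$i$j * Y$j)"

definition clin :: "complex^4 \<Rightarrow> complex^4 \<Rightarrow> complex" where
  "clin u X = (\<Sum>i\<in>UNIV. u$i * X$i)"

definition cmat :: "real^4^4 \<Rightarrow> complex^4^4" where
  "cmat A = (\<chi> i j. complex_of_real (A$i$j))"

definition QSIC :: "real^4^4 \<Rightarrow> real^4^4 \<Rightarrow> (complex^4) set" where
  "QSIC A B = {X. X \<noteq> 0 \<and> cbil (cmat A) X X = 0 \<and> cbil (cmat B) X X = 0}"

text \<open>C is the (nondegenerate) conic cut by the plane u.X = 0 on the quadric X^T S X = 0,
  i.e. the restriction of the form S to the plane is nondegenerate.\<close>
definition conic_rep :: "(complex^4) set \<Rightarrow> complex^4 \<Rightarrow> complex^4^4 \<Rightarrow> bool" where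
  "conic_rep C u S \<longleftrightarrow> u \<noteq> 0 \<and> transpose S = S \<and>
     C = {X. X \<noteq> 0 \<and> clin u X = 0 \<and> cbil S X X = 0} \<and>
     (\<forall>Y. clin u Y = 0 \<and> (\<forall>Z. clin u Z = 0 \<longrightarrow> cbil S Y Z = 0) \<longrightarrow> Y = 0)"

definition is_conic :: "(complex^4) set \<Rightarrow> bool" where
  "is_conic C \<longleftrightarrow> (\<exists>u S. conic_rep C u S)"

definition real_vec :: "complex^4 \<Rightarrow> bool" where
  "real_vec X \<longleftrightarrow> (\<forall>i. Im (X$i) = 0)"

definition ppoint :: "complex^4 \<Rightarrow> (complex^4) set" where
  "ppoint X = {c *s X | c. c \<noteq> 0}"

definition real_points :: "(complex^4) set \<Rightarrow> (complex^4) set set" where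
  "real_points C = ppoint ` {X \<in> C. real_vec X}"

definition real_conic :: "(complex^4) set \<Rightarrow> bool" where
  "real_conic C \<longleftrightarrow> is_conic C \<and> infinite (real_points C)"

definition imaginary_conic :: "(complex^4) set \<Rightarrow> bool" where
  "imaginary_conic C \<longleftrightarrow> is_conic C \<and> finite (real_points C)"

text \<open>Two conics are tangent at P: they have the same tangent line at P.\<close>
definition tangent_at :: "(complex^4) set \<Rightarrow> (complex^4) set \<Rightarrow> complex^4 \<Rightarrow> bool" where
  "tangent_at C1 C2 P \<longleftrightarrow> P \<in> C1 \<and> P \<in> C2 \<and>
     (\<exists>u1 S1 u2 S2. conic_rep C1 u1 S1 \<and> conic_rep C2 u2 S2 \<and>
        {Y. clin u1 Y = 0 \<and> cbil S1 P Y = 0} = {Y. clin u2 Y = 0 \<and> cbil S2 P Y = 0})"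

definition tangent_at_one_real_point :: "(complex^4) set \<Rightarrow> (complex^4) set \<Rightarrow> bool" where
  "tangent_at_one_real_point C1 C2 \<longleftrightarrow>
     (\<exists>P. real_vec P \<and> P \<in> C1 \<inter> C2 \<and> ppoint ` (C1 \<inter> C2) = {ppoint P} \<and> tangent_at C1 C2 P)"

definition QSIC_two_conics :: "real^4^4 \<Rightarrow> real^4^4 \<Rightarrow> (complex^4) set \<Rightarrow> (complex^4) set \<Rightarrow> bool" where
  "QSIC_two_conics A B C1 C2 \<longleftrightarrow> is_conic C1 \<and> is_conic C2 \<and> C1 \<noteq> C2 \<and> QSIC A B = C1 \<union> C2"

end

theory Submission
  imports Defs
begin

text \<open>
  In a Jordan basis of \<open>A\<^sup>-\<^sup>1 B\<close> the Gram matrix of \<open>A\<close> is forced into a five-parameter shape,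
  and a triangular congruence normalises the pencil to \<open>diag(e E, e\<^sub>2, e\<^sub>3)\<close>,
  \<open>diag(e E J\<^sub>2(l\<^sub>1), e\<^sub>2 l\<^sub>1, e\<^sub>3 l\<^sub>2)\<close>. A further explicit congruence diagonalises \<open>x A - B\<close> to
  \<open>diag(e, -e, e\<^sub>2 (x - l\<^sub>1), e\<^sub>3 (x - l\<^sub>2))\<close>, so by Sylvester's law of inertia
  \<open>Id(x) = 1 + [e\<^sub>2 (x - l\<^sub>1) > 0] + [e\<^sub>3 (x - l\<^sub>2) > 0]\<close>. Hence the index
  sequence \<open>\<langle>1 \<wr>\<wr>\<^sub>e| 2 | 3\<rangle>\<close> means exactly \<open>e\<^sub>2 = e\<^sub>3 = 1\<close> and \<open>l\<^sub>1 < l\<^sub>2\<close>, and a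
  Moebius change of the pencil basis sending the roots to \<open>-1, 1\<close> with suitably chosen signs
  always produces it.

  In that situation \<open>B - l\<^sub>1 A = e (Y\<^sub>2\<^sup>2 - k\<^sup>2 Y\<^sub>4\<^sup>2)\<close> in canonical coordinates, with
  \<open>k\<^sup>2 = -e (l\<^sub>2 - l\<^sub>1)\<close>. So the QSIC is the union of the plane sections \<open>Y\<^sub>2 = \<plusminus>k Y\<^sub>4\<close>
  of \<open>A\<close>: two conics meeting only at \<open>(1:0:0:0)\<close>, with the common tangent line
  \<open>Y\<^sub>2 = Y\<^sub>4 = 0\<close> there. They are real for \<open>e = -1\<close> and, \<open>k\<close> being imaginary, have only
  that one real point for \<open>e = 1\<close>.
\<close>

lemma matrix_inv_right:
  fixes A :: "'a::semiring_1^'n^'n"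
  assumes "invertible A"
  shows "A ** matrix_inv A = mat 1"
  using someI_ex[OF assms[unfolded invertible_def]] unfolding matrix_inv_def by auto

lemma matrix_inv_left:
  fixes A :: "'a::semiring_1^'n^'n"
  assumes "invertible A"
  shows "matrix_inv A ** A = mat 1"
  using someI_ex[OF assms[unfolded invertible_def]] unfolding matrix_inv_def by auto

lemma invertible_matrix_inv:
  fixes A :: "'a::semiring_1^'n^'n"
  assumes "invertible A"
  shows "invertible (matrix_inv A)"
  using matrix_inv_left[OF assms] matrix_inv_right[OF assms] unfolding invertible_def by blast

lemma congruence_inverse:
  fixes Q M :: "real^'n^'n"
  assumes "invertible Q"
  shows "M = transpose (matrix_inv Q) ** (transpose Q ** M ** Q) ** matrix_inv Q"
proof -
  have "transpose (matrix_inv Q) ** (transpose Q ** M ** Q) ** matrix_inv Q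
      = transpose (Q ** matrix_inv Q) ** M ** (Q ** matrix_inv Q)"
    by (simp add: matrix_transpose_mul matrix_mul_assoc)
  then show ?thesis using matrix_inv_right[OF assms] by (simp add: transpose_mat)
qed

lemma matrix_add_rdistrib:
  fixes A :: "'a::semiring_1^'n^'m"
  shows "(A + B) ** C = A ** C + B ** C"
  by (simp add: matrix_matrix_mult_def vec_eq_iff sum.distrib distrib_right)

lemma matrix_diff_ldistrib:
  fixes A :: "'a::ring_1^'n^'m"
  shows "A ** (B - C) = A ** B - A ** C"
  by (simp add: matrix_matrix_mult_def vec_eq_iff sum_subtractf right_diff_distrib)

lemma matrix_diff_rdistrib:
  fixes A :: "'a::ring_1^'n^'m"
  shows "(A - B) ** C = A ** C - B ** C"
  by (simp add: matrix_matrix_mult_def vec_eq_iff sum_subtractf left_diff_distrib)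

section \<open>Spectral theorem for real symmetric matrices\<close>

lemma symmetric_matrix_inner:
  fixes M :: "real^'n^'n"
  assumes "transpose M = M"
  shows "x \<bullet> (M *v y) = (M *v x) \<bullet> y"
  by (metis assms dot_lmul_matrix transpose_matrix_vector)

lemma linear_coeff_eq_0_if_quadratic_nonpos:
  fixes c K :: real
  assumes "\<And>t. 2 * t * c + t\<^sup>2 * K \<le> 0"
  shows "c = 0"
proof -
  define m where "m = \<bar>K\<bar> + 1"
  have m: "m > 0" "2 * m + K > 0" by (auto simp: m_def)
  have "2 * (c / m) * c + (c / m)\<^sup>2 * K = c\<^sup>2 * (2 * m + K) / m\<^sup>2"
    using m by (simp add: field_simps power2_eq_square)
  then have "c\<^sup>2 * (2 * m + K) / m\<^sup>2 \<le> 0" using assms[of "c / m"] by simp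
  then have "c\<^sup>2 * (2 * m + K) \<le> 0" using m by (simp add: divide_le_0_iff)
  then show ?thesis using m by (simp add: mult_le_0_iff)
qed

lemma rayleigh_maximizer_is_eigenvector:
  fixes M :: "real^'n^'n"
  assumes sym: "transpose M = M" and V: "subspace V" and inv: "\<And>x. x \<in> V \<Longrightarrow> M *v x \<in> V"
    and v: "v \<in> V" "v \<bullet> v = 1"
    and max: "\<And>y. y \<in> V \<Longrightarrow> y \<bullet> (M *v y) \<le> (v \<bullet> (M *v v)) * (y \<bullet> y)"
  shows "M *v v = (v \<bullet> (M *v v)) *\<^sub>R v"
proof -
  define \<mu> where "\<mu> = v \<bullet> (M *v v)"
  define r where "r = M *v v - \<mu> *\<^sub>R v"
  have "w \<bullet> r = 0" if w: "w \<in> V" for w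
  proof (rule linear_coeff_eq_0_if_quadratic_nonpos)
    fix t :: real
    have "v + t *\<^sub>R w \<in> V" using v w V by (simp add: subspace_add subspace_scale)
    from max[OF this]
    show "2 * t * (w \<bullet> r) + t\<^sup>2 * (w \<bullet> (M *v w) - \<mu> * (w \<bullet> w)) \<le> 0"
      using symmetric_matrix_inner[OF sym, of v w] v(2)
      by (simp add: r_def \<mu>_def matrix_vector_right_distrib matrix_vector_mult_scaleR
          inner_add_left inner_add_right inner_diff_right algebra_simps power2_eq_square
          inner_commute)
  qed
  moreover have "r \<in> V" using inv[OF v(1)] v(1) V by (simp add: r_def subspace_diff subspace_scale)
  ultimately have "r \<bullet> r = 0" by blast
  then show ?thesis by (simp add: r_def \<mu>_def)
qed

lemma invariant_subspace_has_unit_eigenvector: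
  fixes M :: "real^'n^'n"
  assumes sym: "transpose M = M" and V: "subspace V" and inv: "\<And>x. x \<in> V \<Longrightarrow> M *v x \<in> V"
    and nontrivial: "V \<noteq> {0}"
  shows "\<exists>v\<in>V. norm v = 1 \<and> (\<exists>\<mu>. M *v v = \<mu> *\<^sub>R v)"
proof -
  let ?q = "\<lambda>x. x \<bullet> (M *v x)"
  define S where "S = V \<inter> sphere 0 1"
  have unit: "(1 / norm y) *\<^sub>R y \<in> S" if "y \<in> V" "y \<noteq> 0" for y
    using that V by (simp add: S_def subspace_scale)
  obtain v0 where "v0 \<in> V" "v0 \<noteq> 0" using nontrivial V subspace_0 by blast
  then have "S \<noteq> {}" using unit by blast
  moreover have "compact S"
    unfolding S_def using closed_subspace[OF V] by (simp add: closed_Int_compact)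
  moreover have "continuous_on S ?q"
    by (intro continuous_intros)
  ultimately obtain v where vS: "v \<in> S" and vmax: "\<And>y. y \<in> S \<Longrightarrow> ?q y \<le> ?q v"
    by (metis continuous_attains_sup)
  have "?q y \<le> ?q v * (y \<bullet> y)" if y: "y \<in> V" for y
  proof (cases "y = 0")
    case True
    then show ?thesis by simp
  next
    case False
    have "?q y / (norm y)\<^sup>2 = ?q ((1 / norm y) *\<^sub>R y)"
      by (simp add: matrix_vector_mult_scaleR power2_eq_square)
    also have "\<dots> \<le> ?q v" using vmax unit[OF y False] by blast
    finally show ?thesis using False by (simp add: divide_le_eq dot_square_norm mult.commute)
  qed
  moreover have "v \<in> V" "v \<bullet> v = 1" using vS by (auto simp: S_def dot_square_norm)
  ultimately have "M *v v = ?q v *\<^sub>R v"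
    using rayleigh_maximizer_is_eigenvector[OF sym V inv] by blast
  then show ?thesis using vS by (auto simp: S_def)
qed

lemma orthogonal_complement_of_eigenvector:
  fixes M :: "real^'n^'n"
  assumes sym: "transpose M = M" and V: "subspace V" and inv: "\<And>x. x \<in> V \<Longrightarrow> M *v x \<in> V"
    and v: "v \<in> V" "v \<noteq> 0" and eig: "M *v v = \<mu> *\<^sub>R v"
  shows "subspace {y \<in> V. orthogonal v y}"
    "\<And>y. y \<in> {y \<in> V. orthogonal v y} \<Longrightarrow> M *v y \<in> {y \<in> V. orthogonal v y}"
    "dim {y \<in> V. orthogonal v y} + 1 = dim V"
proof -
  show "subspace {y \<in> V. orthogonal v y}"
    using V by (auto simp: subspace_def orthogonal_clauses)
  show "M *v y \<in> {y \<in> V. orthogonal v y}" if "y \<in> {y \<in> V. orthogonal v y}" for y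
    using that inv symmetric_matrix_inner[OF sym, of v y] eig by (simp add: orthogonal_def)
  have eq: "{y \<in> V. \<forall>x \<in> span {v}. orthogonal x y} = {y \<in> V. orthogonal v y}"
    by (auto simp: span_singleton orthogonal_clauses) (metis scaleR_one)
  have "span {v} \<subseteq> V" using v V by (simp add: span_minimal)
  from dim_subspace_orthogonal_to_vectors[OF subspace_span V this, unfolded eq]
  have "dim {y \<in> V. orthogonal v y} + dim (span {v}) = dim V" .
  then show "dim {y \<in> V. orthogonal v y} + 1 = dim V" using v(2) by (simp add: dim_insert)
qed

lemma orthonormal_eigenvectors_invariant_subspace:
  fixes M :: "real^'n^'n"
  assumes sym: "transpose M = M"
  shows "subspace V \<Longrightarrow> (\<And>x. x \<in> V \<Longrightarrow> M *v x \<in> V) \<Longrightarrow>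
    \<exists>B\<subseteq>V. finite B \<and> card B = dim V \<and> pairwise orthogonal B \<and>
      (\<forall>b\<in>B. norm b = 1 \<and> (\<exists>\<mu>. M *v b = \<mu> *\<^sub>R b))"
proof (induction "dim V" arbitrary: V rule: less_induct)
  case less
  note V = less.prems(1) and inv = less.prems(2)
  show ?case
  proof (cases "V = {0}")
    case True
    then show ?thesis by (intro exI[of _ "{}"]) auto
  next
    case False
    obtain v \<mu> where v: "v \<in> V" "norm v = 1" and eig: "M *v v = \<mu> *\<^sub>R v"
      using invariant_subspace_has_unit_eigenvector[OF sym V inv False] by blast
    then have "v \<noteq> 0" by auto
    note W = orthogonal_complement_of_eigenvector[OF sym V inv v(1) this eig]
    obtain B where B: "B \<subseteq> {y \<in> V. orthogonal v y}" "finite B" "card B + 1 = dim V"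
      "pairwise orthogonal B" "\<forall>b\<in>B. norm b = 1 \<and> (\<exists>\<mu>. M *v b = \<mu> *\<^sub>R b)"
      using less.hyps[OF _ W(1,2)] W(3) by fastforce
    have "v \<notin> B" using B(1) \<open>v \<noteq> 0\<close> by (auto simp: orthogonal_self)
    show ?thesis
    proof (intro exI[of _ "insert v B"] conjI)
      show "insert v B \<subseteq> V" using B(1) v(1) by auto
      show "finite (insert v B)" using B(2) by simp
      show "card (insert v B) = dim V" using B(2,3) \<open>v \<notin> B\<close> by simp
      show "pairwise orthogonal (insert v B)"
        using B(1,4) by (auto simp: pairwise_insert orthogonal_commute)
      show "\<forall>b\<in>insert v B. norm b = 1 \<and> (\<exists>\<mu>. M *v b = \<mu> *\<^sub>R b)"
        using B(5) v(2) eig by auto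
    qed
  qed
qed

definition diag_mat :: "('n::finite \<Rightarrow> real) \<Rightarrow> real^'n^'n" where
  "diag_mat d = (\<chi> i j. if i = j then d j else 0)"

lemma symmetric_matrix_orthogonal_diagonalization:
  fixes M :: "real^'n^'n"
  assumes sym: "transpose M = M"
  shows "\<exists>U \<mu>. orthogonal_matrix U \<and> M ** U = U ** diag_mat \<mu>"
proof -
  obtain B where B: "finite B" "card B = CARD('n)" "pairwise orthogonal B"
    "\<forall>b\<in>B. norm b = 1 \<and> (\<exists>\<mu>. M *v b = \<mu> *\<^sub>R b)"
    using orthonormal_eigenvectors_invariant_subspace[OF sym, of UNIV] by auto
  obtain f :: "'n \<Rightarrow> real^'n" where f: "bij_betw f UNIV B"
    using finite_same_card_bij[of "UNIV :: 'n set" B] B(1,2) by auto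
  then have fB: "f j \<in> B" for j by (auto simp: bij_betw_def)
  define \<mu> where "\<mu> j = (SOME m. M *v f j = m *\<^sub>R f j)" for j
  have eig: "M *v f j = \<mu> j *\<^sub>R f j" for j
    unfolding \<mu>_def using B(4) fB[of j] by (metis (mono_tags, lifting) someI_ex)
  define U :: "real^'n^'n" where "U = (\<chi> i j. f j $ i)"
  have col: "column j U = f j" for j by (simp add: column_def U_def vec_eq_iff)
  have "orthogonal_matrix U"
    unfolding orthogonal_matrix_orthonormal_columns col
  proof (intro conjI allI impI)
    show "norm (f j) = 1" for j using B(4) fB by blast
    show "orthogonal (f i) (f j)" if "i \<noteq> j" for i j
    proof -
      have "f i \<noteq> f j" using f that by (auto simp: bij_betw_def inj_on_def)
      then show ?thesis using B(3) fB[of i] fB[of j] by (auto simp: pairwise_def)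
    qed
  qed
  moreover have "(M ** U) $ i $ j = (U ** diag_mat \<mu>) $ i $ j" for i j
  proof -
    have "(U ** diag_mat \<mu>) $ i $ j = (\<Sum>k\<in>UNIV. if k = j then f k $ i * \<mu> j else 0)"
      by (simp add: matrix_matrix_mult_def U_def diag_mat_def if_distrib cong: if_cong)
    moreover have "(M ** U) $ i $ j = (M *v f j) $ i"
      by (simp add: matrix_matrix_mult_def matrix_vector_mult_def U_def)
    ultimately show ?thesis using eig[of j] by (simp add: mult.commute)
  qed
  then have "M ** U = U ** diag_mat \<mu>" by (simp add: vec_eq_iff)
  ultimately show ?thesis by blast
qed

section \<open>Sylvester's law of inertia\<close>

lemma poly_det:
  fixes A :: "'a::comm_ring_1 poly^'n^'n"
  shows "poly (det A) x = det (\<chi> i j. poly (A$i$j) x)"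
  unfolding det_def by (simp add: poly_sum poly_prod)

lemma poly_charpoly4: "poly (charpoly4 M) x = det (x *\<^sub>R mat 1 - M)"
proof -
  have "(\<chi> i j. poly ((\<chi> i j. (if i = j then [:0, 1:] else 0) - [: M$i$j :]) $ i $ j) x)
      = x *\<^sub>R mat 1 - M"
    by (simp add: vec_eq_iff mat_def)
  then show ?thesis unfolding charpoly4_def poly_det by simp
qed

lemma charpoly4_orthogonal_diag:
  fixes M U :: "real^4^4"
  assumes U: "orthogonal_matrix U" and MU: "M ** U = U ** diag_mat \<mu>"
  shows "charpoly4 M = (\<Prod>i\<in>UNIV. [:- \<mu> i, 1:])"
proof -
  have UU: "U ** transpose U = mat 1" "transpose U ** U = mat 1"
    using U by (simp_all add: orthogonal_matrix_def)
  have M: "M = U ** diag_mat \<mu> ** transpose U"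
    by (metis MU UU(1) matrix_mul_assoc matrix_mul_rid)
  have "poly (charpoly4 M) x = (\<Prod>i\<in>UNIV. x - \<mu> i)" for x
  proof -
    have "x *\<^sub>R mat 1 - M = U ** (x *\<^sub>R mat 1 - diag_mat \<mu>) ** transpose U"
      by (simp add: M matrix_diff_ldistrib matrix_diff_rdistrib matrix_scalar_ac
          scalar_matrix_assoc[symmetric] UU matrix_mul_assoc)
    then have "det (x *\<^sub>R mat 1 - M) = det (x *\<^sub>R mat 1 - diag_mat \<mu>) * det (U ** transpose U)"
      by (simp add: det_mul)
    also have "det (x *\<^sub>R mat 1 - diag_mat \<mu>) = (\<Prod>i\<in>UNIV. x - \<mu> i)"
      by (subst det_diagonal) (auto simp: diag_mat_def mat_def)
    finally show ?thesis by (simp add: poly_charpoly4 UU)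
  qed
  then show ?thesis by (simp add: poly_eq_poly_eq_iff[symmetric] fun_eq_iff poly_prod)
qed

lemma order_prod_linear_factors:
  fixes \<mu> :: "'i \<Rightarrow> 'a::idom"
  assumes "finite I"
  shows "order r (\<Prod>i\<in>I. [:- \<mu> i, 1:]) = card {i\<in>I. \<mu> i = r}"
  using assms
proof (induction I rule: finite_induct)
  case empty
  then show ?case by (simp add: order_0I)
next
  case (insert j I)
  have "(\<Prod>i\<in>insert j I. [:- \<mu> i, 1:]) \<noteq> 0"
    using insert.hyps(1) by (simp add: prod_zero_iff del: prod.insert)
  then have "order r (\<Prod>i\<in>insert j I. [:- \<mu> i, 1:]) =
      order r [:- \<mu> j, 1:] + order r (\<Prod>i\<in>I. [:- \<mu> i, 1:])"
    unfolding prod.insert[OF insert.hyps] by (rule order_mult)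
  moreover have "order r [:- \<mu> j, 1:] = (if \<mu> j = r then 1 else 0)"
    using order_power_n_n[of r 1] by (auto simp: order_0I)
  moreover have "{i\<in>insert j I. \<mu> i = r} = (if \<mu> j = r then insert j {i\<in>I. \<mu> i = r} else {i\<in>I. \<mu> i = r})"
    by auto
  ultimately show ?case using insert by simp
qed

lemma npos_eig_prod_linear_factors:
  fixes M :: "real^4^4" and \<mu> :: "4 \<Rightarrow> real"
  assumes cp: "charpoly4 M = (\<Prod>i\<in>UNIV. [:- \<mu> i, 1:])"
  shows "npos_eig M = card {i. \<mu> i > 0}"
proof -
  have "{r. r > 0 \<and> poly (charpoly4 M) r = 0} = \<mu> ` {i. \<mu> i > 0}"
    unfolding cp poly_prod by auto
  then have "npos_eig M = (\<Sum>r\<in>\<mu> ` {i. \<mu> i > 0}. card {i\<in>{i. \<mu> i > 0}. \<mu> i = r})"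
    unfolding npos_eig_def cp order_prod_linear_factors[OF finite]
    by (intro sum.cong refl arg_cong[where f=card]) auto
  also have "\<dots> = card {i. \<mu> i > 0}"
    using sum.image_gen[of "{i. \<mu> i > 0}" "\<lambda>_. 1::nat" \<mu>] by simp
  finally show ?thesis .
qed

lemma quadratic_form_diag_mat: "x \<bullet> (diag_mat d *v x) = (\<Sum>i\<in>UNIV. d i * (x$i)\<^sup>2)"
proof -
  have "(diag_mat d *v x) $ i = d i * x $ i" for i
  proof -
    have "(diag_mat d)$i$j * x$j = (if i = j then d i * x $ i else 0)" for j
      by (simp add: diag_mat_def)
    then show ?thesis by (simp add: matrix_vector_mult_def)
  qed
  then show ?thesis by (simp add: inner_vec_def power2_eq_square algebra_simps)
qed

lemma quadratic_form_congruence: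
  fixes W :: "real^'n^'n"
  shows "x \<bullet> ((transpose W ** D ** W) *v x) = (W *v x) \<bullet> (D *v (W *v x))"
proof -
  have "x \<bullet> ((transpose W ** D ** W) *v x) = x \<bullet> (transpose W *v (D *v (W *v x)))"
    by (simp add: matrix_vector_mul_assoc[symmetric] matrix_mul_assoc)
  also have "\<dots> = (x v* transpose W) \<bullet> (D *v (W *v x))" by (rule dot_lmul_matrix[symmetric])
  also have "x v* transpose W = W *v x"
    using transpose_matrix_vector[of "transpose W" x] by simp
  finally show ?thesis .
qed

lemma quadratic_form_diag_mat_pos:
  assumes "x \<noteq> 0" and "\<And>i. \<not> d i > 0 \<Longrightarrow> x $ i = 0"
  shows "x \<bullet> (diag_mat d *v x) > 0"
proof -
  obtain k where k: "x $ k \<noteq> 0" using assms(1) by (auto simp: vec_eq_iff)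
  have "0 \<le> d i * (x$i)\<^sup>2" for i using assms(2)[of i] by (cases "d i > 0") auto
  then have "d k * (x$k)\<^sup>2 \<le> (\<Sum>i\<in>UNIV. d i * (x$i)\<^sup>2)" by (intro member_le_sum) auto
  moreover have "0 < d k * (x$k)\<^sup>2" using k assms(2)[of k] by force
  ultimately show ?thesis by (simp add: quadratic_form_diag_mat)
qed

lemma quadratic_form_diag_mat_nonpos:
  assumes "\<And>i. d i > 0 \<Longrightarrow> y $ i = 0"
  shows "y \<bullet> (diag_mat d *v y) \<le> 0"
  unfolding quadratic_form_diag_mat
proof (intro sum_nonpos)
  show "d i * (y$i)\<^sup>2 \<le> 0" for i
    using assms[of i] by (cases "d i > 0") (auto intro: mult_nonpos_nonneg)
qed

lemma subspaces_intersect_nontrivially: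
  fixes S T :: "(real^'n) set"
  assumes S: "subspace S" and T: "subspace T" and dim: "dim S + dim T > CARD('n)"
  shows "\<exists>x\<in>S \<inter> T. x \<noteq> 0"
proof -
  have "dim {x + y |x y. x \<in> S \<and> y \<in> T} \<le> CARD('n)"
    using dim_subset_UNIV[of "{x + y |x y. x \<in> S \<and> y \<in> T}"] by simp
  then have "dim (S \<inter> T) \<noteq> 0" using dim_sums_Int[OF S T] dim by linarith
  then show ?thesis by auto
qed

lemma dim_coordinate_subspace: "dim {x::real^'n. \<forall>i. i \<notin> K \<longrightarrow> x$i = 0} = card K"
proof -
  have "vec.dim {x::real^'n. \<forall>i. i \<notin> K \<longrightarrow> x$i = 0} = card K"
    by (rule dim_substandard_cart)
  then show ?thesis by (simp add: dim_vec_eq)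
qed

lemma card_pos_le_if_congruent_diag:
  fixes W :: "real^'n^'n"
  assumes W: "invertible W" and eq: "transpose W ** diag_mat d2 ** W = diag_mat d1"
  shows "card {i. d1 i > 0} \<le> card {i. d2 i > 0}"
proof (rule ccontr)
  assume less: "\<not> ?thesis"
  define V where "V = {x::real^'n. \<forall>i. i \<notin> {i. d1 i > 0} \<longrightarrow> x$i = 0}"
  define Z where "Z = {y::real^'n. \<forall>i. i \<notin> {i. \<not> d2 i > 0} \<longrightarrow> y$i = 0}"
  have "subspace V" "subspace Z" unfolding V_def Z_def by (auto simp: subspace_def)
  then have subspaces: "subspace ((*v) W ` V)" "subspace Z"
    by (auto intro: linear_subspace_image[OF matrix_vector_mul_linear])
  have "dim ((*v) W ` V) = card {i. d1 i > 0}"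
    using dim_image_eq[OF matrix_vector_mul_linear, of W V] inj_matrix_vector_mult[OF W]
      dim_coordinate_subspace[of "{i. d1 i > 0}"] unfolding V_def by (simp add: inj_on_subset)
  moreover have "dim Z + card {i. d2 i > 0} = CARD('n)"
    unfolding Z_def dim_coordinate_subspace
    by (subst card_Un_disjoint[symmetric]) (auto intro: arg_cong[where f=card])
  ultimately obtain x where "x \<in> V" "W *v x \<in> Z" "W *v x \<noteq> 0"
    using subspaces_intersect_nontrivially[OF subspaces] less by fastforce
  then have "x \<bullet> (diag_mat d1 *v x) > 0" "(W *v x) \<bullet> (diag_mat d2 *v (W *v x)) \<le> 0"
    by (auto simp: V_def Z_def intro!: quadratic_form_diag_mat_pos quadratic_form_diag_mat_nonpos)
  then show False using quadratic_form_congruence[of x W "diag_mat d2"] eq by simp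
qed

theorem npos_eig_congruent_diag:
  fixes M S :: "real^4^4"
  assumes sym: "transpose M = M" and S: "invertible S" and M: "M = transpose S ** diag_mat d ** S"
  shows "npos_eig M = card {i. d i > 0}"
proof -
  obtain U \<mu> where U: "orthogonal_matrix U" and MU: "M ** U = U ** diag_mat \<mu>"
    using symmetric_matrix_orthogonal_diagonalization[OF sym] by blast
  have "invertible U" using U unfolding orthogonal_matrix_def invertible_def by blast
  then have W: "invertible (S ** U)" using S by (simp add: invertible_mult)
  have "diag_mat \<mu> = transpose U ** M ** U"
    using MU U by (metis matrix_mul_assoc matrix_mul_lid orthogonal_matrix_def)
  then have e: "transpose (S ** U) ** diag_mat d ** (S ** U) = diag_mat \<mu>"
    by (simp add: M matrix_transpose_mul matrix_mul_assoc)
  then have "transpose (matrix_inv (S ** U)) ** diag_mat \<mu> ** matrix_inv (S ** U) = diag_mat d"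
    using congruence_inverse[OF W, of "diag_mat d"] by simp
  then have "card {i. d i > 0} \<le> card {i. \<mu> i > 0}"
    by (rule card_pos_le_if_congruent_diag[OF invertible_matrix_inv[OF W]])
  moreover have "card {i. \<mu> i > 0} \<le> card {i. d i > 0}"
    by (rule card_pos_le_if_congruent_diag[OF W e])
  moreover have "npos_eig M = card {i. \<mu> i > 0}"
    by (rule npos_eig_prod_linear_factors[OF charpoly4_orthogonal_diag[OF U MU]])
  ultimately show ?thesis by simp
qed

section \<open>Canonical form of a pencil of Segre type [(21)1]\<close>

lemma vector_4 [simp]:
  "(vector [a, b, c, d] :: ('a::zero)^4) $ 1 = a"
  "(vector [a, b, c, d] :: ('a::zero)^4) $ 2 = b"
  "(vector [a, b, c, d] :: ('a::zero)^4) $ 3 = c"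
  "(vector [a, b, c, d] :: ('a::zero)^4) $ 4 = d"
  unfolding vector_def by simp_all

lemma mat4_eq_iff: "(X::'a^4^4) = Y \<longleftrightarrow> (\<forall>i j. X$i$j = Y$i$j)"
  by (simp add: vec_eq_iff)

lemma symmetric_congruence:
  fixes A P :: "'a::comm_semiring_1^'n^'n"
  assumes "transpose A = A"
  shows "transpose (transpose P ** A ** P) = transpose P ** A ** P"
  using assms by (simp add: matrix_transpose_mul matrix_mul_assoc)

definition sym_21_1 :: "real \<Rightarrow> real \<Rightarrow> real \<Rightarrow> real \<Rightarrow> real \<Rightarrow> real^4^4" where
  "sym_21_1 a b c d f = vector [vector [0, a, 0, 0], vector [a, b, c, 0], vector [0, c, d, 0],
                                vector [0, 0, 0, f]]"

definition transf_21_1 :: "real \<Rightarrow> real \<Rightarrow> real \<Rightarrow> real \<Rightarrow> real \<Rightarrow> real^4^4" where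
  "transf_21_1 \<alpha> \<beta> \<gamma> \<epsilon> \<zeta> = vector [vector [\<alpha>, \<beta>, \<gamma>, 0], vector [0, \<alpha>, 0, 0], vector [0, 0, \<epsilon>, 0],
                                   vector [0, 0, 0, \<zeta>]]"

lemma canA_21_1_eq_sym_21_1: "canA_21_1 e e2 e3 = sym_21_1 e 0 0 e2 e3"
  unfolding mat4_eq_iff forall_4 by (simp add: canA_21_1_def sym_21_1_def)

lemma canB_21_1_eq_sym_21_1: "canB_21_1 e e2 e3 l1 l2 = sym_21_1 (e * l1) e 0 (e2 * l1) (e3 * l2)"
  unfolding mat4_eq_iff forall_4 by (simp add: canB_21_1_def sym_21_1_def)

lemma sym_21_1_eqI:
  "a = a' \<Longrightarrow> b = b' \<Longrightarrow> c = c' \<Longrightarrow> d = d' \<Longrightarrow> f = f' \<Longrightarrow> sym_21_1 a b c d f = sym_21_1 a' b' c' d' f'"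
  by simp

lemma sym_21_1_mult_jordan:
  "sym_21_1 a b c d f ** jordan_21_1 l1 l2 = sym_21_1 (a * l1) (a + b * l1) (c * l1) (d * l1) (f * l2)"
  unfolding mat4_eq_iff forall_4
  by (simp add: matrix_matrix_mult_def sum_4 sym_21_1_def jordan_21_1_def algebra_simps)

lemma sym_21_1_congruence:
  "transpose (transf_21_1 \<alpha> \<beta> \<gamma> \<epsilon> \<zeta>) ** sym_21_1 a b c d f ** transf_21_1 \<alpha> \<beta> \<gamma> \<epsilon> \<zeta> =
   sym_21_1 (\<alpha> * \<alpha> * a) (\<alpha> * \<alpha> * b + 2 * \<alpha> * \<beta> * a) (\<alpha> * \<gamma> * a + \<alpha> * \<epsilon> * c) (\<epsilon> * \<epsilon> * d)
     (\<zeta> * \<zeta> * f)"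
  unfolding mat4_eq_iff forall_4
  by (simp add: matrix_matrix_mult_def transpose_def sum_4 sym_21_1_def transf_21_1_def algebra_simps)

lemma invertible_transf_21_1:
  assumes "\<alpha> \<noteq> 0" "\<epsilon> \<noteq> 0" "\<zeta> \<noteq> 0"
  shows "invertible (transf_21_1 \<alpha> \<beta> \<gamma> \<epsilon> \<zeta>)"
proof -
  define R :: "real^4^4" where "R = vector [vector [1/\<alpha>, -\<beta>/(\<alpha>*\<alpha>), -\<gamma>/(\<alpha>*\<epsilon>), 0],
     vector [0, 1/\<alpha>, 0, 0], vector [0, 0, 1/\<epsilon>, 0], vector [0, 0, 0, 1/\<zeta>]]"
  have "transf_21_1 \<alpha> \<beta> \<gamma> \<epsilon> \<zeta> ** R = mat 1" "R ** transf_21_1 \<alpha> \<beta> \<gamma> \<epsilon> \<zeta> = mat 1"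
    unfolding mat4_eq_iff forall_4 using assms
    by (simp_all add: matrix_matrix_mult_def sum_4 transf_21_1_def R_def mat_def field_simps)
  then show ?thesis unfolding invertible_def by blast
qed

lemma sym_21_1_if_intertwines_jordan:
  fixes G :: "real^4^4"
  assumes sym: "transpose G = G" and l12: "l1 \<noteq> l2"
    and GJ: "G ** jordan_21_1 l1 l2 = transpose (jordan_21_1 l1 l2) ** G"
  shows "G = sym_21_1 (G$1$2) (G$2$2) (G$2$3) (G$3$3) (G$4$4)"
proof -
  have Gs: "G$i$j = G$j$i" for i j
  proof -
    have "(transpose G)$i$j = G$j$i" by (simp add: transpose_def)
    then show ?thesis using sym by simp
  qed
  have e: "(G ** jordan_21_1 l1 l2)$i$j = (transpose (jordan_21_1 l1 l2) ** G)$i$j" for i j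
    using GJ by simp
  have "G$1$4 * l2 = l1 * G$1$4" "G$3$4 * l2 = l1 * G$3$4" "G$2$4 * l2 = G$1$4 + l1 * G$2$4"
    "G$1$1 + G$1$2 * l1 = l1 * G$1$2" "G$2$3 * l1 = G$1$3 + l1 * G$2$3"
    using e[of 1 4] e[of 3 4] e[of 2 4] e[of 1 2] e[of 2 3]
    by (simp_all add: matrix_matrix_mult_def sum_4 jordan_21_1_def transpose_def)
  moreover from this(1) have "G$1$4 = 0" using l12 by (simp add: mult.commute)
  ultimately have "G$1$4 = 0" "G$3$4 = 0" "G$2$4 = 0" "G$1$1 = 0" "G$1$3 = 0"
    using l12 by (simp_all add: mult.commute)
  then show ?thesis
    unfolding mat4_eq_iff forall_4 sym_21_1_def
    using Gs[of 2 1] Gs[of 3 1] Gs[of 4 1] Gs[of 3 2] Gs[of 4 2] Gs[of 4 3] by simp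
qed

lemma invertible_kernel_trivial:
  fixes G :: "'a::field^'n^'n"
  assumes "invertible G" "G *v x = 0"
  shows "x = 0"
  using inj_matrix_vector_mult[OF assms(1)] assms(2) by (metis injD matrix_vector_mult_0_right)

lemma sym_21_1_invertible_nonzero:
  assumes "invertible (sym_21_1 a b c d f)"
  shows "a \<noteq> 0" "d \<noteq> 0" "f \<noteq> 0"
proof -
  have kernel: "sym_21_1 a b c d f *v x = 0 \<Longrightarrow> x = 0" for x
    by (rule invertible_kernel_trivial[OF assms])
  show a: "a \<noteq> 0"
  proof
    assume "a = 0"
    then have "sym_21_1 a b c d f *v axis 1 1 = 0"
      by (simp add: sym_21_1_def vec_eq_iff forall_4 matrix_vector_mult_def sum_4 axis_def)
    then show False using kernel[of "axis 1 1"] by (simp add: axis_eq_0_iff)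
  qed
  show "d \<noteq> 0"
  proof
    assume "d = 0"
    then have "sym_21_1 a b c d f *v vector [c, 0, -a, 0] = 0"
      by (simp add: sym_21_1_def vec_eq_iff forall_4 matrix_vector_mult_def sum_4)
    then have "(vector [c, 0, -a, 0] :: real^4) = 0" by (rule kernel)
    then have "(vector [c, 0, -a, 0] :: real^4) $ 3 = 0" by simp
    then show False using a by simp
  qed
  show "f \<noteq> 0"
  proof
    assume "f = 0"
    then have "sym_21_1 a b c d f *v axis 4 1 = 0"
      by (simp add: sym_21_1_def vec_eq_iff forall_4 matrix_vector_mult_def sum_4 axis_def)
    then show False using kernel[of "axis 4 1"] by (simp add: axis_eq_0_iff)
  qed
qed

lemma sgnr_normalization:
  fixes a :: real
  assumes "a \<noteq> 0"
  obtains e where "sgnr e * a > 0" "a / \<bar>a\<bar> = sgnr e"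
  using assms that[of Pos] that[of Neg] by (cases "a > 0") (auto simp: sgnr_def)

lemma sgnr_mult_pos_imp_Pos: "sgnr e * x > 0 \<Longrightarrow> x > 0 \<Longrightarrow> e = Pos"
  by (cases e) (auto simp: sgnr_def)

lemma sym_21_1_canonical_congruence:
  assumes a: "a \<noteq> 0" and d: "d \<noteq> 0" and f: "f \<noteq> 0"
  obtains R e e2 e3 where "invertible R"
    "transpose R ** sym_21_1 a b c d f ** R = canA_21_1 (sgnr e) (sgnr e2) (sgnr e3)"
    "transpose R ** (sym_21_1 a b c d f ** jordan_21_1 l1 l2) ** R
       = canB_21_1 (sgnr e) (sgnr e2) (sgnr e3) l1 l2"
    "sgnr e2 * d > 0" "sgnr e3 * f > 0"
proof -
  obtain e where e: "a / \<bar>a\<bar> = sgnr e" using sgnr_normalization[OF a] by blast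
  obtain e2 where e2: "sgnr e2 * d > 0" "d / \<bar>d\<bar> = sgnr e2" using sgnr_normalization[OF d] by blast
  obtain e3 where e3: "sgnr e3 * f > 0" "f / \<bar>f\<bar> = sgnr e3" using sgnr_normalization[OF f] by blast
  define \<alpha> where "\<alpha> = 1 / sqrt \<bar>a\<bar>"
  define \<epsilon> where "\<epsilon> = 1 / sqrt \<bar>d\<bar>"
  define \<zeta> where "\<zeta> = 1 / sqrt \<bar>f\<bar>"
  define R where "R = transf_21_1 \<alpha> (- \<alpha> * b / (2 * a)) (- \<epsilon> * c / a) \<epsilon> \<zeta>"
  have R: "invertible R" unfolding R_def using a d f
    by (intro invertible_transf_21_1) (auto simp: \<alpha>_def \<epsilon>_def \<zeta>_def)
  have "\<alpha> * \<alpha> * a = sgnr e" "\<epsilon> * \<epsilon> * d = sgnr e2" "\<zeta> * \<zeta> * f = sgnr e3"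
    using e e2(2) e3(2) by (simp_all add: \<alpha>_def \<epsilon>_def \<zeta>_def)
  then have "transpose R ** sym_21_1 a b c d f ** R = canA_21_1 (sgnr e) (sgnr e2) (sgnr e3)"
    "transpose R ** (sym_21_1 a b c d f ** jordan_21_1 l1 l2) ** R
       = canB_21_1 (sgnr e) (sgnr e2) (sgnr e3) l1 l2"
    unfolding R_def sym_21_1_mult_jordan sym_21_1_congruence canA_21_1_eq_sym_21_1
      canB_21_1_eq_sym_21_1
    using a by (auto intro!: sym_21_1_eqI simp: field_simps)
  then show ?thesis using that R e2(1) e3(1) by blast
qed

theorem canonical_form_21_1:
  fixes A B P :: "real^4^4"
  assumes symA: "transpose A = A" and symB: "transpose B = B" and A: "invertible A"
    and P: "invertible P" and BP: "B ** P = A ** P ** jordan_21_1 l1 l2" and l12: "l1 \<noteq> l2"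
  obtains Q e e2 e3 where "invertible Q"
    "transpose Q ** A ** Q = canA_21_1 (sgnr e) (sgnr e2) (sgnr e3)"
    "transpose Q ** B ** Q = canB_21_1 (sgnr e) (sgnr e2) (sgnr e3) l1 l2"
    "sgnr e2 * (transpose P ** A ** P) $ 3 $ 3 > 0"
    "sgnr e3 * (transpose P ** A ** P) $ 4 $ 4 > 0"
proof -
  define G where "G = transpose P ** A ** P"
  have GB: "transpose P ** B ** P = G ** jordan_21_1 l1 l2"
    using arg_cong[OF BP, of "(**) (transpose P)"] by (simp add: G_def matrix_mul_assoc)
  have symG: "transpose G = G" unfolding G_def by (rule symmetric_congruence[OF symA])
  have "transpose (G ** jordan_21_1 l1 l2) = G ** jordan_21_1 l1 l2"
    using symmetric_congruence[OF symB, of P] GB by simp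
  then have "G ** jordan_21_1 l1 l2 = transpose (jordan_21_1 l1 l2) ** G"
    using symG by (simp add: matrix_transpose_mul)
  then have G: "G = sym_21_1 (G$1$2) (G$2$2) (G$2$3) (G$3$3) (G$4$4)"
    by (rule sym_21_1_if_intertwines_jordan[OF symG l12])
  have "invertible G"
    unfolding G_def using A P by (simp add: invertible_mult transpose_invertible)
  then have "G$1$2 \<noteq> 0" "G$3$3 \<noteq> 0" "G$4$4 \<noteq> 0"
    using sym_21_1_invertible_nonzero G by metis+
  then obtain R e e2 e3 where R: "invertible R"
    "transpose R ** G ** R = canA_21_1 (sgnr e) (sgnr e2) (sgnr e3)"
    "transpose R ** (G ** jordan_21_1 l1 l2) ** R = canB_21_1 (sgnr e) (sgnr e2) (sgnr e3) l1 l2"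
    "sgnr e2 * G$3$3 > 0" "sgnr e3 * G$4$4 > 0"
    using sym_21_1_canonical_congruence G by metis
  show ?thesis
  proof (rule that[of "P ** R" e e2 e3])
    show "invertible (P ** R)" using P R(1) by (rule invertible_mult)
    show "transpose (P ** R) ** A ** (P ** R) = canA_21_1 (sgnr e) (sgnr e2) (sgnr e3)"
      using R(2) by (simp add: G_def matrix_transpose_mul matrix_mul_assoc)
    show "transpose (P ** R) ** B ** (P ** R) = canB_21_1 (sgnr e) (sgnr e2) (sgnr e3) l1 l2"
      using R(3) by (simp add: GB[symmetric] matrix_transpose_mul matrix_mul_assoc)
  qed (use R(4,5) G_def in auto)
qed

lemma segre_21_1_jordan_relation:
  fixes A B :: "real^4^4"
  assumes A: "invertible A" and "segre_21_1 A B l1 l2"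
  obtains P where "invertible P" "B ** P = A ** P ** jordan_21_1 l1 l2"
proof -
  obtain P where P: "invertible P"
    and PJ: "matrix_inv P ** (matrix_inv A ** B) ** P = jordan_21_1 l1 l2"
    using assms(2) unfolding segre_21_1_def by blast
  have "A ** P ** jordan_21_1 l1 l2 = A ** (P ** matrix_inv P) ** (matrix_inv A ** B) ** P"
    unfolding PJ[symmetric] by (simp add: matrix_mul_assoc)
  also have "\<dots> = B ** P"
    by (simp add: matrix_inv_right[OF P] matrix_mul_assoc matrix_inv_right[OF A])
  finally show ?thesis using that P by simp
qed

definition diagonalizer_21_1 :: "real \<Rightarrow> real^4^4" where
  "diagonalizer_21_1 \<delta> = vector [vector [\<delta>, 0, 0, 0], vector [-\<delta>, 1, 0, 0], vector [0, 0, 1, 0],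
                                 vector [0, 0, 0, 1]]"

lemma invertible_diagonalizer_21_1: "\<delta> \<noteq> 0 \<Longrightarrow> invertible (diagonalizer_21_1 \<delta>)"
  unfolding invertible_def
  by (rule exI[of _ "vector [vector [1/\<delta>, 0, 0, 0], vector [1, 1, 0, 0], vector [0, 0, 1, 0],
                             vector [0, 0, 0, 1]]"])
    (simp add: mat4_eq_iff forall_4 matrix_matrix_mult_def sum_4 diagonalizer_21_1_def mat_def)

text \<open>On the first block, \<open>s (2 \<delta> y\<^sub>1 y\<^sub>2 - y\<^sub>2\<^sup>2) = s (\<delta> y\<^sub>1)\<^sup>2 - s (y\<^sub>2 - \<delta> y\<^sub>1)\<^sup>2\<close>.\<close>
lemma canonical_21_1_pencil_diagonalization:
  "x *\<^sub>R canA_21_1 s e2 e3 - canB_21_1 s e2 e3 l1 l2 =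
   transpose (diagonalizer_21_1 (x - l1)) **
   diag_mat (\<lambda>i. if i = 1 then s else if i = 2 then - s else if i = 3 then e2 * (x - l1)
                  else e3 * (x - l2)) **
   diagonalizer_21_1 (x - l1)"
  unfolding mat4_eq_iff forall_4
  by (simp add: matrix_matrix_mult_def sum_4 diagonalizer_21_1_def diag_mat_def transpose_def
      canA_21_1_def canB_21_1_def algebra_simps)

lemma card_UNIV_4_Collect:
  "card {i::4. P i} = (if P 1 then 1 else 0) + (if P 2 then 1 else 0) + (if P 3 then 1 else 0)
                      + (if P 4 then 1 else 0)"
proof -
  have "card {i::4. P i} = (\<Sum>i\<in>UNIV. if P i then 1 else 0)"
    using sum.inter_filter[of UNIV "\<lambda>_. 1::nat" P] by simp
  then show ?thesis by (simp add: sum_4)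
qed

lemma Id_pencil_canonical_21_1:
  fixes A B Q :: "real^4^4"
  assumes symA: "transpose A = A" and symB: "transpose B = B" and Q: "invertible Q"
    and QA: "transpose Q ** A ** Q = canA_21_1 (sgnr e) (sgnr e2) (sgnr e3)"
    and QB: "transpose Q ** B ** Q = canB_21_1 (sgnr e) (sgnr e2) (sgnr e3) l1 l2"
    and x: "x \<noteq> l1"
  shows "Id_pencil A B x = 1 + (if sgnr e2 * (x - l1) > 0 then 1 else 0)
                             + (if sgnr e3 * (x - l2) > 0 then 1 else 0)"
proof -
  define T where "T = diagonalizer_21_1 (x - l1) ** matrix_inv Q"
  define d :: "4 \<Rightarrow> real" where "d i = (if i = 1 then sgnr e else if i = 2 then - sgnr e
      else if i = 3 then sgnr e2 * (x - l1) else sgnr e3 * (x - l2))" for i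
  have sym: "transpose (x *\<^sub>R A - B) = x *\<^sub>R A - B"
    using symA symB by (simp add: vec_eq_iff transpose_def)
  have "transpose Q ** (x *\<^sub>R A - B) ** Q = x *\<^sub>R canA_21_1 (sgnr e) (sgnr e2) (sgnr e3)
      - canB_21_1 (sgnr e) (sgnr e2) (sgnr e3) l1 l2"
    unfolding QA[symmetric] QB[symmetric]
    by (simp add: matrix_diff_ldistrib matrix_diff_rdistrib matrix_scalar_ac
        scalar_matrix_assoc[symmetric])
  then have "x *\<^sub>R A - B = transpose T ** diag_mat d ** T"
    using congruence_inverse[OF Q, of "x *\<^sub>R A - B"]
    unfolding canonical_21_1_pencil_diagonalization d_def T_def
    by (simp add: matrix_transpose_mul matrix_mul_assoc)
  moreover have "invertible T"
    unfolding T_def using x Q by (intro invertible_mult invertible_diagonalizer_21_1 invertible_matrix_inv) auto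
  ultimately have "Id_pencil A B x = card {i. d i > 0}"
    unfolding Id_pencil_def by (intro npos_eig_congruent_diag sym)
  then show ?thesis
    unfolding card_UNIV_4_Collect by (cases e) (simp_all add: d_def sgnr_def)
qed

lemma index_sequence_21_1_of_canonical:
  fixes A B Q :: "real^4^4"
  assumes symA: "transpose A = A" and symB: "transpose B = B" and Q: "invertible Q"
    and l12: "l1 < l2"
    and QA: "transpose Q ** A ** Q = canA_21_1 (sgnr e) 1 1"
    and QB: "transpose Q ** B ** Q = canB_21_1 (sgnr e) 1 1 l1 l2"
  shows "index_sequence_21_1 A B (IdxSeq [1, 2, 3] [[Wr e, Wr e, Bar], [Bar]])"
proof -
  have Pos: "sgnr Pos = 1" by (simp add: sgnr_def)
  have Id: "Id_pencil A B x = 1 + (if x - l1 > 0 then 1 else 0) + (if x - l2 > 0 then 1 else 0)"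
    if "x \<noteq> l1" for x
    using Id_pencil_canonical_21_1[OF symA symB Q, of e Pos Pos] QA QB that by (simp add: Pos)
  show ?thesis
    unfolding index_sequence_21_1_def
    using Q l12 QA QB
    by (intro exI[of _ Q] exI[of _ l1] exI[of _ l2] exI[of _ e] exI[of _ Pos] exI[of _ 1]
        exI[of _ 2] exI[of _ 3]) (auto simp: Id Pos)
qed

lemma canonical_of_index_sequence_21_1:
  fixes A B :: "real^4^4"
  assumes symA: "transpose A = A" and symB: "transpose B = B"
    and idx: "index_sequence_21_1 A B (IdxSeq [1, 2, 3] [[Wr e, Wr e, Bar], [Bar]])"
  obtains Q l1 l2 where "invertible Q" "l1 < l2"
    "transpose Q ** A ** Q = canA_21_1 (sgnr e) 1 1"
    "transpose Q ** B ** Q = canB_21_1 (sgnr e) 1 1 l1 l2"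
proof -
  obtain Q l1 l2 e' e2 e3 s0 s1 s2 where Q: "invertible Q"
    and QA: "transpose Q ** A ** Q = canA_21_1 (sgnr e') (sgnr e2) (sgnr e3)"
    and QB: "transpose Q ** B ** Q = canB_21_1 (sgnr e') (sgnr e2) (sgnr e3) l1 l2"
    and Id: "\<forall>l. max l1 l2 < l \<longrightarrow> Id_pencil A B l = s2"
    and S: "IdxSeq [1, 2, 3] [[Wr e, Wr e, Bar], [Bar]] = IdxSeq [s0, s1, s2]
              (if l1 < l2 then [[Wr e', Wr e', Bar], [Bar]] else [[Bar], [Wr e', Wr e', Bar]])"
    using idx unfolding index_sequence_21_1_def by blast
  have l12: "l1 < l2" and e': "e' = e" and "s2 = 3" using S by (auto split: if_splits)
  then have "Id_pencil A B (l2 + 1) = 3" using Id by auto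
  moreover have "Id_pencil A B (l2 + 1) = 1 + (if sgnr e2 * (l2 + 1 - l1) > 0 then 1 else 0)
                             + (if sgnr e3 * (l2 + 1 - l2) > 0 then 1 else 0)"
    using l12 by (intro Id_pencil_canonical_21_1[OF symA symB Q QA QB]) simp
  ultimately have "sgnr e2 * (l2 + 1 - l1) > 0" "sgnr e3 * (l2 + 1 - l2) > 0"
    by (auto split: if_splits)
  then have "e2 = Pos" "e3 = Pos" using l12 by (auto simp: sgnr_def split: sgn.splits)
  then show ?thesis using that Q l12 QA QB e' by (simp add: sgnr_def)
qed

section \<open>Change of basis of the pencil\<close>

lemma symmetric_pencil_combination:
  fixes A B :: "real^'n^'n"
  assumes "transpose A = A" "transpose B = B"
  shows "transpose (a *\<^sub>R A + b *\<^sub>R B) = a *\<^sub>R A + b *\<^sub>R B"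
  using assms by (simp add: transpose_def vec_eq_iff)

lemma pencil_combination_mult:
  fixes A B P J :: "real^'n^'n"
  assumes "B ** P = A ** P ** J"
  shows "(a *\<^sub>R A + b *\<^sub>R B) ** P = A ** P ** (a *\<^sub>R mat 1 + b *\<^sub>R J)"
  using assms
  by (simp add: matrix_add_rdistrib matrix_add_ldistrib matrix_scalar_ac scalar_matrix_assoc[symmetric])

lemma diag_mat_mult: "diag_mat d ** diag_mat d' = diag_mat (\<lambda>i. d i * d' i)"
proof -
  have "(diag_mat d)$i$k * (diag_mat d')$k$j = (if k = i then (if i = j then d i * d' i else 0) else 0)"
    for i j k by (simp add: diag_mat_def)
  then show ?thesis by (simp add: matrix_matrix_mult_def vec_eq_iff diag_mat_def)
qed

lemma invertible_diag_mat:
  assumes "\<And>i. d i \<noteq> 0"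
  shows "invertible (diag_mat d)"
proof -
  have "diag_mat (\<lambda>_. 1) = mat 1" by (simp add: diag_mat_def mat_def)
  then have "diag_mat d ** diag_mat (\<lambda>i. 1 / d i) = mat 1" "diag_mat (\<lambda>i. 1 / d i) ** diag_mat d = mat 1"
    using assms by (simp_all add: diag_mat_mult)
  then show ?thesis unfolding invertible_def by blast
qed

lemma invertible_pencil_combination:
  fixes A B P :: "real^4^4"
  assumes A: "invertible A" and P: "invertible P" and BP: "B ** P = A ** P ** jordan_21_1 l1 l2"
    and p: "a + b * l1 \<noteq> 0" and q: "a + b * l2 \<noteq> 0"
  shows "invertible (a *\<^sub>R A + b *\<^sub>R B)"
proof -
  define T where "T = transf_21_1 (a + b * l1) b 0 (a + b * l1) (a + b * l2)"
  have "a *\<^sub>R mat 1 + b *\<^sub>R jordan_21_1 l1 l2 = T"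
    unfolding mat4_eq_iff forall_4 T_def
    by (simp add: transf_21_1_def jordan_21_1_def mat_def algebra_simps)
  then have "(a *\<^sub>R A + b *\<^sub>R B) ** P = A ** P ** T" by (simp add: pencil_combination_mult[OF BP])
  then have "a *\<^sub>R A + b *\<^sub>R B = A ** P ** T ** matrix_inv P"
    by (metis matrix_inv_right[OF P] matrix_mul_assoc matrix_mul_rid)
  moreover have "invertible T" unfolding T_def using p q by (simp add: invertible_transf_21_1)
  ultimately show ?thesis using A P by (simp add: invertible_mult invertible_matrix_inv)
qed

lemma jordan_21_1_mobius:
  fixes a b c d k m1 m2 l1 l2 :: real
  assumes "(a + b * l1) * m1 = c + d * l1" "(a + b * l2) * m2 = c + d * l2"
    and "d * k = a + b * l1 + b * k * m1"
  shows "(c *\<^sub>R mat 1 + d *\<^sub>R jordan_21_1 l1 l2) ** diag_mat (\<lambda>i. if i = 2 then k else 1) =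
    (a *\<^sub>R mat 1 + b *\<^sub>R jordan_21_1 l1 l2) ** diag_mat (\<lambda>i. if i = 2 then k else 1) **
      jordan_21_1 m1 m2"
  unfolding mat4_eq_iff forall_4
  by (simp add: matrix_matrix_mult_def sum_4 diag_mat_def mat_def jordan_21_1_def; use assms in algebra)

text \<open>In the basis \<open>(a A + b B, c A + d B)\<close> the roots move by the Moebius map
  \<open>\<lambda> \<mapsto> (c + d \<lambda>) / (a + b \<lambda>)\<close>, and the second vector of the Jordan chain is rescaled
  by \<open>k = (a + b l\<^sub>1)\<^sup>2 / (a d - b c)\<close>.\<close>
lemma pencil_basis_change_jordan:
  fixes A B P :: "real^4^4"
  assumes BP: "B ** P = A ** P ** jordan_21_1 l1 l2" and P: "invertible P"
    and p: "a + b * l1 \<noteq> 0" and q: "a + b * l2 \<noteq> 0" and det: "a * d - b * c \<noteq> 0"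
  obtains P' where "invertible P'"
    "(c *\<^sub>R A + d *\<^sub>R B) ** P' = (a *\<^sub>R A + b *\<^sub>R B) ** P' **
        jordan_21_1 ((c + d * l1) / (a + b * l1)) ((c + d * l2) / (a + b * l2))"
    "(transpose P' ** (a *\<^sub>R A + b *\<^sub>R B) ** P') $ 3 $ 3 = (a + b * l1) * (transpose P ** A ** P) $ 3 $ 3"
    "(transpose P' ** (a *\<^sub>R A + b *\<^sub>R B) ** P') $ 4 $ 4 = (a + b * l2) * (transpose P ** A ** P) $ 4 $ 4"
proof -
  define k where "k = (a + b * l1)\<^sup>2 / (a * d - b * c)"
  define D :: "real^4^4" where "D = diag_mat (\<lambda>i. if i = 2 then k else 1)"
  define J where "J = jordan_21_1 l1 l2"
  define J' where "J' = jordan_21_1 ((c + d * l1) / (a + b * l1)) ((c + d * l2) / (a + b * l2))"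
  define m1 where "m1 = (c + d * l1) / (a + b * l1)"
  have m1: "(a + b * l1) * m1 = c + d * l1" using p by (simp add: m1_def)
  have "(a + b * l1) * (d * k - b * k * m1) = k * (a * d - b * c)" using m1 by algebra
  also have "\<dots> = (a + b * l1) * (a + b * l1)" using det by (simp add: k_def power2_eq_square)
  finally have "d * k - b * k * m1 = a + b * l1" using p mult_cancel_left by blast
  then have "d * k = a + b * l1 + b * k * ((c + d * l1) / (a + b * l1))"
    unfolding m1_def[symmetric] by linarith
  then have mobius: "(c *\<^sub>R mat 1 + d *\<^sub>R J) ** D = (a *\<^sub>R mat 1 + b *\<^sub>R J) ** D ** J'"
    unfolding D_def J_def J'_def using p q by (intro jordan_21_1_mobius) simp_all
  have comb: "(x *\<^sub>R A + y *\<^sub>R B) ** P = A ** P ** (x *\<^sub>R mat 1 + y *\<^sub>R J)" for x y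
    using pencil_combination_mult[OF BP] by (simp add: J_def)
  have "k \<noteq> 0" using p det by (simp add: k_def)
  then have inv: "invertible (P ** D)"
    using P by (auto simp: D_def split: if_splits intro!: invertible_mult invertible_diag_mat)
  have "(c *\<^sub>R A + d *\<^sub>R B) ** (P ** D) = A ** P ** ((c *\<^sub>R mat 1 + d *\<^sub>R J) ** D)"
    "(a *\<^sub>R A + b *\<^sub>R B) ** (P ** D) ** J' = A ** P ** ((a *\<^sub>R mat 1 + b *\<^sub>R J) ** D ** J')"
    by (simp_all only: matrix_mul_assoc comb)
  then have rel: "(c *\<^sub>R A + d *\<^sub>R B) ** (P ** D) = (a *\<^sub>R A + b *\<^sub>R B) ** (P ** D) ** J'"
    by (simp only: mobius)
  define G where "G = transpose P ** A ** P"
  have "transpose (P ** D) ** (a *\<^sub>R A + b *\<^sub>R B) ** (P ** D)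
      = transpose D ** (G ** (a *\<^sub>R mat 1 + b *\<^sub>R J)) ** D"
    using arg_cong[OF comb[of a b], of "\<lambda>M. transpose D ** (transpose P ** M) ** D"]
    by (simp add: G_def matrix_transpose_mul matrix_mul_assoc)
  moreover have "(transpose D ** (G ** (a *\<^sub>R mat 1 + b *\<^sub>R J)) ** D) $ 3 $ 3 = (a + b * l1) * G $ 3 $ 3"
    "(transpose D ** (G ** (a *\<^sub>R mat 1 + b *\<^sub>R J)) ** D) $ 4 $ 4 = (a + b * l2) * G $ 4 $ 4"
    by (simp_all add: matrix_matrix_mult_def sum_4 D_def diag_mat_def mat_def J_def jordan_21_1_def
        transpose_def algebra_simps)
  ultimately show ?thesis
    using that[OF inv rel[unfolded J'_def]] by (simp add: G_def)
qed

lemma pencil_coefficients_moving_roots: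
  fixes l1 l2 p q :: real
  assumes l12: "l1 \<noteq> l2" and p: "p \<noteq> 0" and q: "q \<noteq> 0"
  obtains a b c d where "a * d - b * c \<noteq> 0"
    "a + b * l1 = p" "a + b * l2 = q" "c + d * l1 = - p" "c + d * l2 = q"
proof -
  define b where "b = (q - p) / (l2 - l1)"
  define d where "d = (q + p) / (l2 - l1)"
  define a where "a = p - b * l1"
  define c where "c = - p - d * l1"
  have "b * (l2 - l1) = q - p" "d * (l2 - l1) = q + p" using l12 by (simp_all add: b_def d_def)
  then have coeffs: "a + b * l1 = p" "a + b * l2 = q" "c + d * l1 = - p" "c + d * l2 = q"
    unfolding a_def c_def by (simp_all add: algebra_simps)
  have "(a * d - b * c) * (l2 - l1) = (a + b * l1) * (c + d * l2) - (a + b * l2) * (c + d * l1)"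
    by (simp add: algebra_simps)
  also have "\<dots> = 2 * p * q" by (simp add: coeffs)
  finally have "a * d - b * c \<noteq> 0" using p q by auto
  then show ?thesis using that coeffs by blast
qed

text \<open>Choosing \<open>a + b l\<^sub>i\<close> with the signs of the diagonal Gram entries makes both signs of the
  1x1 blocks positive in the new canonical form.\<close>
lemma pencil_basis_normalizing_signs:
  fixes A B P :: "real^4^4"
  assumes symA: "transpose A = A" and symB: "transpose B = B" and A: "invertible A"
    and P: "invertible P" and BP: "B ** P = A ** P ** jordan_21_1 l1 l2" and l12: "l1 \<noteq> l2"
  obtains a b c d Q e where "a * d - b * c \<noteq> 0" "invertible (a *\<^sub>R A + b *\<^sub>R B)" "invertible Q"
    "transpose Q ** (a *\<^sub>R A + b *\<^sub>R B) ** Q = canA_21_1 (sgnr e) 1 1"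
    "transpose Q ** (c *\<^sub>R A + d *\<^sub>R B) ** Q = canB_21_1 (sgnr e) 1 1 (-1) 1"
proof -
  define G where "G = transpose P ** A ** P"
  obtain e2 e3 where signs: "sgnr e2 * G $ 3 $ 3 > 0" "sgnr e3 * G $ 4 $ 4 > 0"
    using canonical_form_21_1[OF symA symB A P BP l12] unfolding G_def by metis
  have "sgnr e2 \<noteq> 0" "sgnr e3 \<noteq> 0" by (simp_all add: sgnr_def split: sgn.splits)
  then obtain a b c d where det: "a * d - b * c \<noteq> 0"
    and coeffs: "a + b * l1 = sgnr e2" "a + b * l2 = sgnr e3" "c + d * l1 = - sgnr e2"
      "c + d * l2 = sgnr e3"
    using pencil_coefficients_moving_roots[OF l12] by metis
  let ?A = "a *\<^sub>R A + b *\<^sub>R B" and ?B = "c *\<^sub>R A + d *\<^sub>R B"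
  have p: "a + b * l1 \<noteq> 0" and q: "a + b * l2 \<noteq> 0"
    using coeffs \<open>sgnr e2 \<noteq> 0\<close> \<open>sgnr e3 \<noteq> 0\<close> by simp_all
  obtain P' where P': "invertible P'"
      "?B ** P' = ?A ** P' ** jordan_21_1 ((c + d * l1) / (a + b * l1)) ((c + d * l2) / (a + b * l2))"
    and gram: "(transpose P' ** ?A ** P') $ 3 $ 3 = (a + b * l1) * G $ 3 $ 3"
      "(transpose P' ** ?A ** P') $ 4 $ 4 = (a + b * l2) * G $ 4 $ 4"
    using pencil_basis_change_jordan[OF BP P p q det] unfolding G_def by blast
  have "(c + d * l1) / (a + b * l1) = -1" "(c + d * l2) / (a + b * l2) = 1"
    using coeffs p q by simp_all
  then have BP': "?B ** P' = ?A ** P' ** jordan_21_1 (-1) 1" using P'(2) by simp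
  have symA': "transpose ?A = ?A" and symB': "transpose ?B = ?B"
    using symmetric_pencil_combination[OF symA symB] by auto
  have A': "invertible ?A" by (rule invertible_pencil_combination[OF A P BP p q])
  have neg_one_neq_one: "(-1::real) \<noteq> 1" by simp
  obtain Q e e2' e3' where Q: "invertible Q"
      "transpose Q ** ?A ** Q = canA_21_1 (sgnr e) (sgnr e2') (sgnr e3')"
      "transpose Q ** ?B ** Q = canB_21_1 (sgnr e) (sgnr e2') (sgnr e3') (-1) 1"
    and signs': "sgnr e2' * (transpose P' ** ?A ** P') $ 3 $ 3 > 0"
      "sgnr e3' * (transpose P' ** ?A ** P') $ 4 $ 4 > 0"
    using canonical_form_21_1[OF symA' symB' A' P'(1) BP' neg_one_neq_one] by blast
  have "e2' = Pos" "e3' = Pos"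
    using signs signs' unfolding gram coeffs by (auto intro: sgnr_mult_pos_imp_Pos)
  then show ?thesis using that[OF det A' Q(1)] Q(2,3) by (simp add: sgnr_def)
qed

theorem index_sequence_equiv_21_1:
  fixes A B P :: "real^4^4"
  assumes symA: "transpose A = A" and symB: "transpose B = B" and A: "invertible A"
    and P: "invertible P" and BP: "B ** P = A ** P ** jordan_21_1 l1 l2" and l12: "l1 \<noteq> l2"
  shows "index_sequence_equiv A B seq_minus \<or> index_sequence_equiv A B seq_plus"
proof -
  obtain a b c d Q e where det: "a * d - b * c \<noteq> 0" and A': "invertible (a *\<^sub>R A + b *\<^sub>R B)"
    and Q: "invertible Q" "transpose Q ** (a *\<^sub>R A + b *\<^sub>R B) ** Q = canA_21_1 (sgnr e) 1 1"
      "transpose Q ** (c *\<^sub>R A + d *\<^sub>R B) ** Q = canB_21_1 (sgnr e) 1 1 (-1) 1"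
    by (rule pencil_basis_normalizing_signs[OF symA symB A P BP l12])
  have "index_sequence_21_1 (a *\<^sub>R A + b *\<^sub>R B) (c *\<^sub>R A + d *\<^sub>R B)
      (IdxSeq [1, 2, 3] [[Wr e, Wr e, Bar], [Bar]])"
    by (rule index_sequence_21_1_of_canonical[OF symmetric_pencil_combination[OF symA symB]
          symmetric_pencil_combination[OF symA symB] Q(1) _ Q(2,3)]) simp
  moreover have "det (a *\<^sub>R A + b *\<^sub>R B) \<noteq> 0" using A' by (simp add: invertible_det_nz)
  ultimately show ?thesis
    unfolding index_sequence_equiv_def seq_minus_def seq_plus_def using det
    by (cases e) blast+
qed

section \<open>The intersection curve of a canonical pencil\<close>

lemma cmat_mult: "cmat (A ** B) = cmat A ** cmat B"
  by (simp add: cmat_def matrix_matrix_mult_def vec_eq_iff)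

lemma cmat_transpose: "cmat (transpose A) = transpose (cmat A)"
  by (simp add: cmat_def transpose_def vec_eq_iff)

lemma cmat_mat_1: "cmat (mat 1) = mat 1"
  by (simp add: cmat_def mat_def vec_eq_iff)

lemma real_vec_cmat_mult: "real_vec X \<Longrightarrow> real_vec (cmat M *v X)"
  by (simp add: real_vec_def cmat_def matrix_vector_mult_def Im_sum)

lemma clin_commute: "clin u X = clin X u"
  by (simp add: clin_def mult.commute)

lemma clin_transpose: "clin (transpose M *v u) X = clin u (M *v X)"
proof -
  have "clin (transpose M *v u) X = (\<Sum>i\<in>UNIV. \<Sum>j\<in>UNIV. M$j$i * u$j * X$i)"
    by (simp add: clin_def matrix_vector_mult_def transpose_def sum_distrib_right
        del: transpose_matrix_vector)
  also have "\<dots> = (\<Sum>j\<in>UNIV. \<Sum>i\<in>UNIV. M$j$i * u$j * X$i)" by (rule sum.swap)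
  also have "\<dots> = clin u (M *v X)"
    by (simp add: clin_def matrix_vector_mult_def sum_distrib_left ac_simps)
  finally show ?thesis .
qed

lemma cbil_eq_clin: "cbil S X Y = clin X (S *v Y)"
  by (simp add: cbil_def clin_def matrix_vector_mult_def sum_distrib_left mult.assoc)

lemma cbil_congruence: "cbil (transpose M ** S ** M) X Z = cbil S (M *v X) (M *v Z)"
proof -
  have "cbil (transpose M ** S ** M) X Z = clin (transpose M *v (S *v (M *v Z))) X"
    by (simp add: cbil_eq_clin clin_commute[of X] matrix_vector_mul_assoc[symmetric]
        del: transpose_matrix_vector)
  also have "\<dots> = cbil S (M *v X) (M *v Z)"
    by (simp add: clin_transpose cbil_eq_clin clin_commute[of "M *v X"] del: transpose_matrix_vector)
  finally show ?thesis .
qed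

lemma ppoint_scale:
  assumes "c \<noteq> 0"
  shows "ppoint (c *s X) = ppoint X"
proof -
  have "{c' *s (c *s X) |c'. c' \<noteq> 0} = {c' *s X |c'. c' \<noteq> 0}"
  proof (intro set_eqI iffI; elim CollectE exE conjE)
    show "Y \<in> {c' *s X |c'. c' \<noteq> 0}" if "Y = c' *s (c *s X)" "c' \<noteq> 0" for Y c'
      using that assms by (auto simp: vector_smult_assoc intro!: exI[of _ "c' * c"])
    show "Y \<in> {c' *s (c *s X) |c'. c' \<noteq> 0}" if "Y = c' *s X" "c' \<noteq> 0" for Y c'
      using that assms by (auto simp: vector_smult_assoc intro!: exI[of _ "c' / c"])
  qed
  then show ?thesis by (simp add: ppoint_def)
qed

lemma ppoint_self: "X \<in> ppoint X"
  unfolding ppoint_def by (auto intro: exI[of _ 1])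

lemma infinite_real_points:
  fixes X :: "real \<Rightarrow> complex^4"
  assumes "\<And>t. X t \<in> C" "\<And>t. real_vec (X t)" "inj (\<lambda>t. ppoint (X t))"
  shows "infinite (real_points C)"
proof
  assume "finite (real_points C)"
  moreover have "range (\<lambda>t. ppoint (X t)) \<subseteq> real_points C"
    using assms(1,2) by (auto simp: real_points_def)
  ultimately have "finite (range (\<lambda>t. ppoint (X t)))" by (rule finite_subset[rotated])
  then show False using assms(3) finite_imageD infinite_UNIV_char_0 by blast
qed

lemma cbil_canA_21_1:
  "cbil (cmat (canA_21_1 s 1 1)) W Z = of_real s * (W$1 * Z$2 + W$2 * Z$1) + W$3 * Z$3 + W$4 * Z$4"
  by (simp add: cbil_def sum_4 cmat_def canA_21_1_def algebra_simps)

lemma cbil_canB_21_1: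
  "cbil (cmat (canB_21_1 s 1 1 l1 l2)) W Z =
    of_real (s * l1) * (W$1 * Z$2 + W$2 * Z$1) + of_real s * W$2 * Z$2 + of_real l1 * W$3 * Z$3
    + of_real l2 * W$4 * Z$4"
  by (simp add: cbil_def sum_4 cmat_def canB_21_1_def algebra_simps)

lemma clin_4: "clin u X = u$1 * X$1 + u$2 * X$2 + u$3 * X$3 + u$4 * X$4"
  by (simp add: clin_def sum_4)

locale canonical_21_1_pencil =
  fixes A B Q :: "real^4^4" and s l1 l2 :: real
  assumes symA: "transpose A = A" and invQ: "invertible Q"
    and canA: "transpose Q ** A ** Q = canA_21_1 s 1 1"
    and canB: "transpose Q ** B ** Q = canB_21_1 s 1 1 l1 l2"
    and sign: "s = 1 \<or> s = -1" and l12: "l1 < l2"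
begin

definition coords :: "complex^4 \<Rightarrow> complex^4" where
  "coords X = cmat (matrix_inv Q) *v X"

definition point :: "complex^4 \<Rightarrow> complex^4" where
  "point Y = cmat Q *v Y"

text \<open>In coordinates \<open>B - l\<^sub>1 A\<close> is \<open>s (Y\<^sub>2\<^sup>2 - slope\<^sup>2 Y\<^sub>4\<^sup>2)\<close>, and \<open>slope\<close> is real
  exactly when \<open>s = -1\<close>.\<close>
definition slope :: complex where
  "slope = (if s = -1 then 1 else \<i>) * of_real (sqrt (l2 - l1))"

definition plane :: "complex \<Rightarrow> complex^4" where
  "plane \<sigma> = transpose (cmat (matrix_inv Q)) *v vector [0, 1, 0, - \<sigma> * slope]"

definition conic :: "complex \<Rightarrow> (complex^4) set" where
  "conic \<sigma> = {X. X \<noteq> 0 \<and> clin (plane \<sigma>) X = 0 \<and> cbil (cmat A) X X = 0}"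

definition vertex :: "complex^4" where
  "vertex = point (axis 1 1)"

lemma coords_point [simp]: "coords (point Y) = Y"
  using matrix_inv_left[OF invQ]
  by (simp add: coords_def point_def matrix_vector_mul_assoc cmat_mult[symmetric] cmat_mat_1)

lemma point_coords [simp]: "point (coords X) = X"
  using matrix_inv_right[OF invQ]
  by (simp add: coords_def point_def matrix_vector_mul_assoc cmat_mult[symmetric] cmat_mat_1)

lemma coords_eq_0_iff [simp]: "coords X = 0 \<longleftrightarrow> X = 0"
  by (metis coords_def matrix_vector_mult_0_right point_coords)

lemma point_eq_0_iff [simp]: "point Y = 0 \<longleftrightarrow> Y = 0"
  by (metis coords_eq_0_iff coords_point)

lemma point_scale: "point (c *s Y) = c *s point Y"
  by (simp add: point_def vector_scalar_commute)

lemma real_vec_point: "real_vec Y \<Longrightarrow> real_vec (point Y)"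
  unfolding point_def by (rule real_vec_cmat_mult)

lemma real_vec_coords: "real_vec X \<Longrightarrow> real_vec (coords X)"
  unfolding coords_def by (rule real_vec_cmat_mult)

lemma cbil_A_coords: "cbil (cmat A) X Z = cbil (cmat (canA_21_1 s 1 1)) (coords X) (coords Z)"
  using arg_cong[OF congruence_inverse[OF invQ, of A], of cmat]
  by (simp add: canA cmat_mult cmat_transpose cbil_congruence coords_def)

lemma cbil_B_coords: "cbil (cmat B) X Z = cbil (cmat (canB_21_1 s 1 1 l1 l2)) (coords X) (coords Z)"
  using arg_cong[OF congruence_inverse[OF invQ, of B], of cmat]
  by (simp add: canB cmat_mult cmat_transpose cbil_congruence coords_def)

lemma quadric_A:
  "cbil (cmat A) X X = of_real s * (2 * coords X $ 1 * coords X $ 2)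
     + coords X $ 3 * coords X $ 3 + coords X $ 4 * coords X $ 4"
  by (simp add: cbil_A_coords cbil_canA_21_1 algebra_simps)

lemma slope_nonzero: "slope \<noteq> 0"
  using l12 by (simp add: slope_def)

lemma s_slope_square: "of_real s * slope * slope = - of_real (l2 - l1)"
proof -
  have "of_real (sqrt (l2 - l1)) * of_real (sqrt (l2 - l1)) = (of_real (l2 - l1) :: complex)"
    using l12 by (simp flip: of_real_mult)
  then show ?thesis using sign by (auto simp: slope_def algebra_simps)
qed

lemma quadric_B:
  "cbil (cmat B) X X = of_real l1 * cbil (cmat A) X X +
     of_real s * (coords X $ 2 - slope * coords X $ 4) * (coords X $ 2 + slope * coords X $ 4)"
proof -
  have "of_real s * (coords X $ 2 - slope * coords X $ 4) * (coords X $ 2 + slope * coords X $ 4)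
      = of_real s * coords X $ 2 * coords X $ 2 - (of_real s * slope * slope) * coords X $ 4 * coords X $ 4"
    by (simp add: algebra_simps)
  then show ?thesis
    unfolding s_slope_square cbil_B_coords cbil_canB_21_1 quadric_A by (simp add: algebra_simps)
qed

lemma clin_plane: "clin (plane \<sigma>) X = coords X $ 2 - \<sigma> * slope * coords X $ 4"
  unfolding plane_def clin_transpose by (simp add: clin_4 coords_def)

lemma QSIC_eq_conic_union: "QSIC A B = conic 1 \<union> conic (-1)"
proof -
  have "of_real s \<noteq> (0::complex)" using sign by auto
  then show ?thesis
    by (auto simp: QSIC_def conic_def clin_plane quadric_B)
qed

lemma conic_rep_conic:
  assumes \<sigma>: "\<sigma> \<noteq> 0"
  shows "conic_rep (conic \<sigma>) (plane \<sigma>) (cmat A)"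
proof -
  have "clin (plane \<sigma>) (point (axis 2 1)) = 1" by (simp add: clin_plane axis_def)
  then have "plane \<sigma> \<noteq> 0" by (auto simp: clin_def)
  moreover have "transpose (cmat A) = cmat A" using symA by (simp flip: cmat_transpose)
  moreover have "V = 0"
    if V: "clin (plane \<sigma>) V = 0" and polar: "\<forall>Z. clin (plane \<sigma>) Z = 0 \<longrightarrow> cbil (cmat A) V Z = 0"
    for V
  proof -
    define W where "W = coords V"
    have W: "cbil (cmat (canA_21_1 s 1 1)) W Z = 0" if "Z $ 2 - \<sigma> * slope * Z $ 4 = 0" for Z
      using polar[rule_format, of "point Z"] that by (simp add: clin_plane cbil_A_coords W_def)
    have "W$2 = 0" using W[of "axis 1 1"] sign by (auto simp: cbil_canA_21_1 axis_def)
    moreover from this have "W$4 = 0" using V \<sigma> slope_nonzero by (simp add: clin_plane W_def)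
    moreover have "W$3 = 0" using W[of "axis 3 1"] by (simp add: cbil_canA_21_1 axis_def)
    moreover have "W$1 = 0"
      using W[of "vector [0, \<sigma> * slope, 0, 1]"] sign \<sigma> slope_nonzero calculation
      by (auto simp: cbil_canA_21_1)
    ultimately have "W = 0" by (simp add: vec_eq_iff forall_4)
    then show ?thesis by (simp add: W_def)
  qed
  ultimately show ?thesis unfolding conic_rep_def conic_def by blast
qed

lemma is_conic_conic: "\<sigma> \<noteq> 0 \<Longrightarrow> is_conic (conic \<sigma>)"
  using conic_rep_conic unfolding is_conic_def by blast

lemma conic_1_neq_conic_minus_1: "conic 1 \<noteq> conic (-1)"
proof -
  define Y :: "complex^4" where "Y = vector [- of_real s / (2 * slope), slope, 0, 1]"
  have "of_real s * (2 * (- of_real s / (2 * slope)) * slope) + 1 = (0::complex)"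
    using sign slope_nonzero by (auto simp: field_simps)
  moreover have "Y \<noteq> 0" by (auto simp: Y_def vec_eq_iff forall_4)
  ultimately have "point Y \<in> conic 1" by (simp add: conic_def clin_plane quadric_A Y_def)
  moreover have "point Y \<notin> conic (-1)" using slope_nonzero by (simp add: conic_def clin_plane Y_def)
  ultimately show ?thesis by blast
qed

lemma vertex_in_conic: "vertex \<in> conic \<sigma>"
  using axis_eq_0_iff[of 1 "1::complex"]
  by (simp add: conic_def vertex_def clin_plane quadric_A axis_def)

lemma ppoint_eq_vertex:
  assumes "X \<noteq> 0" "coords X $ 2 = 0" "coords X $ 3 = 0" "coords X $ 4 = 0"
  shows "ppoint X = ppoint vertex"
proof -
  have "coords X = coords X $ 1 *s axis 1 1"
    using assms(2-4) by (simp add: vec_eq_iff forall_4 axis_def)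
  then have X: "X = coords X $ 1 *s vertex" by (metis point_coords point_scale vertex_def)
  then have "coords X $ 1 \<noteq> 0" using assms(1) by auto
  then show ?thesis by (subst X) (rule ppoint_scale)
qed

lemma conics_meet_at_vertex: "ppoint ` (conic 1 \<inter> conic (-1)) = {ppoint vertex}"
proof -
  have "ppoint X = ppoint vertex" if "X \<in> conic 1" "X \<in> conic (-1)" for X
  proof -
    have planes: "coords X $ 2 - slope * coords X $ 4 = 0" "coords X $ 2 + slope * coords X $ 4 = 0"
      and X: "X \<noteq> 0" "cbil (cmat A) X X = 0"
      using that by (auto simp: conic_def clin_plane)
    then have "2 * slope * coords X $ 4 = 0" by (simp add: algebra_simps)
    then have Y4: "coords X $ 4 = 0" using slope_nonzero by simp
    then have Y2: "coords X $ 2 = 0" using planes by simp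
    then have "coords X $ 3 * coords X $ 3 = 0" using X(2) Y4 by (simp add: quadric_A)
    then show ?thesis using ppoint_eq_vertex X(1) Y2 Y4 by simp
  qed
  then show ?thesis using vertex_in_conic by blast
qed

lemma tangent_at_vertex: "tangent_at (conic 1) (conic (-1)) vertex"
proof -
  have "cbil (cmat A) vertex Z = of_real s * coords Z $ 2" for Z
    by (simp add: cbil_A_coords vertex_def cbil_canA_21_1 axis_def)
  then have "{Y. clin (plane 1) Y = 0 \<and> cbil (cmat A) vertex Y = 0}
      = {Y. clin (plane (-1)) Y = 0 \<and> cbil (cmat A) vertex Y = 0}"
    using sign slope_nonzero by (auto simp: clin_plane)
  then show ?thesis
    unfolding tangent_at_def using vertex_in_conic conic_rep_conic[of 1] conic_rep_conic[of "-1"]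
    by auto
qed

lemma ppoint_point_eq_imp_eq:
  assumes "ppoint (point Y) = ppoint (point Y')" "Y $ 4 = 1" "Y' $ 4 = 1"
  shows "Y = Y'"
proof -
  obtain c where "point Y = c *s point Y'"
    using ppoint_self[of "point Y"] assms(1) by (auto simp: ppoint_def)
  then have Y: "Y = c *s Y'" by (metis coords_point point_scale)
  then have "c = 1" using assms(2,3) by (simp add: vec_eq_iff)
  then show ?thesis using Y by simp
qed

lemma real_conic_if_neg:
  assumes s: "s = -1" and \<sigma>: "\<sigma> = 1 \<or> \<sigma> = -1"
  shows "real_conic (conic (of_real \<sigma>))"
proof -
  define r where "r = sqrt (l2 - l1)"
  have r: "r > 0" using l12 by (simp add: r_def)
  have slope: "slope = of_real r" unfolding slope_def using s by (simp add: r_def)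
  define Y :: "real \<Rightarrow> complex^4" where
    "Y t = vector [of_real (\<sigma> * (t * t + 1) / (2 * r)), of_real (\<sigma> * r), of_real t, 1]" for t
  have "point (Y t) \<in> conic (of_real \<sigma>)" for t
  proof -
    have "s * (2 * (\<sigma> * (t * t + 1) / (2 * r)) * (\<sigma> * r)) + t * t + 1 = 0"
      using r \<sigma> s by (auto simp: field_simps)
    moreover have "cbil (cmat A) (point (Y t)) (point (Y t)) =
        of_real (s * (2 * (\<sigma> * (t * t + 1) / (2 * r)) * (\<sigma> * r)) + t * t + 1)"
      unfolding quadric_A by (simp add: Y_def)
    moreover have "Y t \<noteq> 0" by (auto simp: Y_def vec_eq_iff forall_4)
    ultimately show ?thesis by (simp add: conic_def clin_plane Y_def slope)
  qed
  moreover have "real_vec (point (Y t))" for t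
    by (rule real_vec_point) (simp add: real_vec_def Y_def forall_4)
  moreover have "inj (\<lambda>t. ppoint (point (Y t)))"
  proof (rule injI)
    fix t t' assume "ppoint (point (Y t)) = ppoint (point (Y t'))"
    then have "Y t = Y t'" by (rule ppoint_point_eq_imp_eq) (simp_all add: Y_def)
    then have "Y t $ 3 = Y t' $ 3" by simp
    then show "t = t'" by (simp add: Y_def)
  qed
  ultimately show ?thesis
    unfolding real_conic_def using is_conic_conic \<sigma> infinite_real_points by fastforce
qed

lemma imaginary_conic_if_pos:
  assumes s: "s = 1" and \<sigma>: "\<sigma> = 1 \<or> \<sigma> = -1"
  shows "imaginary_conic (conic (of_real \<sigma>))"
proof -
  have "ppoint X = ppoint vertex" if X: "X \<in> conic (of_real \<sigma>)" "real_vec X" for X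
  proof -
    define W where "W = coords X"
    have W: "\<And>i. Im (W $ i) = 0" using real_vec_coords[OF X(2)] by (simp add: W_def real_vec_def)
    have plane: "W$2 - of_real \<sigma> * slope * W$4 = 0" and X': "X \<noteq> 0" "cbil (cmat A) X X = 0"
      using X(1) by (auto simp: conic_def clin_plane W_def)
    then have "Im (W$2 - of_real \<sigma> * slope * W$4) = 0" by simp
    moreover have "slope = \<i> * of_real (sqrt (l2 - l1))" unfolding slope_def using s by simp
    ultimately have "\<sigma> * sqrt (l2 - l1) * Re (W$4) = 0" using W by simp
    then have "W$4 = 0" using \<sigma> l12 W by (auto simp: complex_eq_iff)
    moreover from this have "W$2 = 0" using plane by simp
    moreover from calculation have "W$3 * W$3 = 0" using X'(2) by (simp add: quadric_A W_def)
    ultimately show ?thesis using ppoint_eq_vertex X'(1) by (simp add: W_def)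
  qed
  then have "real_points (conic (of_real \<sigma>)) \<subseteq> {ppoint vertex}"
    by (auto simp: real_points_def)
  then show ?thesis
    unfolding imaginary_conic_def using is_conic_conic \<sigma> finite_subset by fastforce
qed

theorem QSIC_two_tangent_conics:
  "QSIC_two_conics A B (conic 1) (conic (-1)) \<and> tangent_at_one_real_point (conic 1) (conic (-1)) \<and>
   (s = -1 \<longrightarrow> real_conic (conic 1) \<and> real_conic (conic (-1))) \<and>
   (s = 1 \<longrightarrow> imaginary_conic (conic 1) \<and> imaginary_conic (conic (-1)))"
proof (intro conjI impI)
  show "QSIC_two_conics A B (conic 1) (conic (-1))"
    unfolding QSIC_two_conics_def
    using is_conic_conic[of 1] is_conic_conic[of "-1"] conic_1_neq_conic_minus_1 QSIC_eq_conic_union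
    by simp
  have "real_vec vertex" unfolding vertex_def by (rule real_vec_point) (simp add: real_vec_def axis_def)
  then show "tangent_at_one_real_point (conic 1) (conic (-1))"
    unfolding tangent_at_one_real_point_def
    using vertex_in_conic conics_meet_at_vertex tangent_at_vertex by blast
qed (use real_conic_if_neg[of 1] real_conic_if_neg[of "-1"] imaginary_conic_if_pos[of 1]
       imaginary_conic_if_pos[of "-1"] in auto)

end

lemma linear_2x2_eq_0_iff:
  fixes a b c d x y :: "'a::field"
  assumes "a * d - b * c \<noteq> 0"
  shows "a * x + b * y = 0 \<and> c * x + d * y = 0 \<longleftrightarrow> x = 0 \<and> y = 0"
proof
  assume h: "a * x + b * y = 0 \<and> c * x + d * y = 0"
  have "(a * d - b * c) * x = d * (a * x + b * y) - b * (c * x + d * y)"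
    "(a * d - b * c) * y = a * (c * x + d * y) - c * (a * x + b * y)"
    by (simp_all add: algebra_simps)
  then show "x = 0 \<and> y = 0" using h assms by simp
qed simp

lemma cbil_cmat_combination:
  "cbil (cmat (a *\<^sub>R A + b *\<^sub>R B)) X X = of_real a * cbil (cmat A) X X + of_real b * cbil (cmat B) X X"
  by (simp add: cbil_def cmat_def sum.distrib sum_distrib_left algebra_simps)

lemma QSIC_pencil_basis_change:
  assumes "a * d - b * c \<noteq> 0"
  shows "QSIC (a *\<^sub>R A + b *\<^sub>R B) (c *\<^sub>R A + d *\<^sub>R B) = QSIC A B"
proof -
  have "complex_of_real a * of_real d - of_real b * of_real c \<noteq> 0"
    using assms by (metis of_real_diff of_real_eq_0_iff of_real_mult)
  then show ?thesis
    unfolding QSIC_def cbil_cmat_combination by (simp add: linear_2x2_eq_0_iff)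
qed

lemma QSIC_of_index_sequence_123:
  fixes A B :: "real^4^4"
  assumes symA: "transpose A = A" and symB: "transpose B = B"
    and idx: "index_sequence_equiv A B (IdxSeq [1, 2, 3] [[Wr e, Wr e, Bar], [Bar]])"
  obtains C1 C2 where "QSIC_two_conics A B C1 C2" "tangent_at_one_real_point C1 C2"
    "e = Neg \<Longrightarrow> real_conic C1 \<and> real_conic C2"
    "e = Pos \<Longrightarrow> imaginary_conic C1 \<and> imaginary_conic C2"
proof -
  obtain a b c d where det: "a * d - b * c \<noteq> 0"
    and idx': "index_sequence_21_1 (a *\<^sub>R A + b *\<^sub>R B) (c *\<^sub>R A + d *\<^sub>R B)
                 (IdxSeq [1, 2, 3] [[Wr e, Wr e, Bar], [Bar]])"
    using idx unfolding index_sequence_equiv_def by blast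
  have sym: "transpose (a *\<^sub>R A + b *\<^sub>R B) = a *\<^sub>R A + b *\<^sub>R B"
    "transpose (c *\<^sub>R A + d *\<^sub>R B) = c *\<^sub>R A + d *\<^sub>R B"
    using symmetric_pencil_combination[OF symA symB] by auto
  obtain Q l1 l2 where "invertible Q" "l1 < l2"
    "transpose Q ** (a *\<^sub>R A + b *\<^sub>R B) ** Q = canA_21_1 (sgnr e) 1 1"
    "transpose Q ** (c *\<^sub>R A + d *\<^sub>R B) ** Q = canB_21_1 (sgnr e) 1 1 l1 l2"
    using canonical_of_index_sequence_21_1[OF sym idx'] by blast
  then interpret canonical_21_1_pencil "a *\<^sub>R A + b *\<^sub>R B" "c *\<^sub>R A + d *\<^sub>R B" Q "sgnr e" l1 l2
    using sym by unfold_locales (auto simp: sgnr_def split: sgn.splits)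
  have "QSIC_two_conics A B (conic 1) (conic (-1))"
    using QSIC_two_tangent_conics QSIC_pencil_basis_change[OF det]
    unfolding QSIC_two_conics_def by simp
  then show ?thesis
    using that QSIC_two_tangent_conics by (cases e) (auto simp: sgnr_def)
qed

theorem theorem16:
  fixes A B :: "real^4^4" and l1 l2 :: real
  assumes symA: "symmetric4 A" and symB: "symmetric4 B"
    and nonsingA: "det A \<noteq> 0"
    and nonzero: "pencil_poly A B \<noteq> 0"
    and roots: "l1 \<noteq> l2" "order l1 (pencil_poly A B) = 3" "order l2 (pencil_poly A B) = 1"
    and segre: "segre_21_1 A B l1 l2"
  shows "(index_sequence_equiv A B seq_minus \<or> index_sequence_equiv A B seq_plus) \<and>
         (index_sequence_equiv A B seq_minus \<longrightarrow>
            (\<exists>C1 C2. QSIC_two_conics A B C1 C2 \<and> real_conic C1 \<and> real_conic C2 \<and>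
                     tangent_at_one_real_point C1 C2)) \<and>
         (index_sequence_equiv A B seq_plus \<longrightarrow>
            (\<exists>C1 C2. QSIC_two_conics A B C1 C2 \<and> imaginary_conic C1 \<and> imaginary_conic C2 \<and>
                     tangent_at_one_real_point C1 C2))"
proof -
  have symA': "transpose A = A" and symB': "transpose B = B"
    using symA symB by (simp_all add: symmetric4_def)
  have A: "invertible A" using nonsingA by (simp add: invertible_det_nz)
  obtain P where "invertible P" "B ** P = A ** P ** jordan_21_1 l1 l2"
    using segre_21_1_jordan_relation[OF A segre] by blast
  then have "index_sequence_equiv A B seq_minus \<or> index_sequence_equiv A B seq_plus"
    using index_sequence_equiv_21_1[OF symA' symB' A _ _ roots(1)] by blast
  moreover have "\<exists>C1 C2. QSIC_two_conics A B C1 C2 \<and> real_conic C1 \<and> real_conic C2 \<and>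
      tangent_at_one_real_point C1 C2" if "index_sequence_equiv A B seq_minus"
    using QSIC_of_index_sequence_123[OF symA' symB' that[unfolded seq_minus_def]] by metis
  moreover have "\<exists>C1 C2. QSIC_two_conics A B C1 C2 \<and> imaginary_conic C1 \<and> imaginary_conic C2 \<and>
      tangent_at_one_real_point C1 C2" if "index_sequence_equiv A B seq_plus"
    using QSIC_of_index_sequence_123[OF symA' symB' that[unfolded seq_plus_def]] by metis
  ultimately show ?thesis by blast
qed

end
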